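(* Let $w$ be any weight function, $n\ge1$ and $-1<x<1$. Then $$\underline{p}_x(t)\le\chi_{[-1,x)}(t)\le\chi_{[-1,x]}(t)\le p_x(t)\qquad\text{for all }-1\le t\le1.$$ In addition: if $-1\in S_x$ then $\underline{p}_x'(-1)\le0\le p_x'(-1)$; if $-1\notin S_x$ then $p_x'(-1)\le0\le\underline{p}_x'(-1)$; if $1\in S_x$ then $p_x'(1)\le0\le\underline{p}_x'(1)$; if $1\notin S_x$ then $\underline{p}_x'(1)\le 0\le p_x'(1)$.
   Context: A weight function is a non-negative integrable function $w$ on $[-1,1]$ with nonzero integral. $\chi_A$ denotes the indicator function of $A$. Fix $n\ge1$. Let $\varphi$ be the orthonormal polynomial of degree $n$ with positive leading coefficient w.r.t. $w(t)\,dt$ on $[-1,1]$ and $\psi$ the orthonormal polynomial of degree $n-1$ with positive leading coefficient w.r.t. $(1-t^2)w(t)\,dt$. For real $a$ let $P_a(t)=\varphi(t)-a(1-t)\psi(t)$ if $a\ge0$, $P_a(t)=\varphi(t)-a(1+t)\psi(t)$ if $a\le0$; its zeros are $-1<\xi_1(a)<\dots<\xi_n(a)<1$. The zeros of $(1-t^2)\psi(t)$ are $-1=\eta_0<\eta_1<\dots<\eta_n=1$. The following node sets each carry a unique quadrature formula with positive weights exact for all polynomials of degree $\le 2n-1$ with respect to $w$: $\{\xi_i(0)\}_{i=1}^n$; $\{\eta_0,\dots,\eta_n\}$; $\{-1\}\cup\{\xi_i(a)\}_i$ for $0<a<\infty$; $\{\xi_i(a)\}_i\cup\{1\}$ for $-\infty<a<0$.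 Each $x\in(-1,1)$ is a node of exactly one of them; call its node set $S_x$. Let $I(u)=2$ for $-1<u<1$ and $I(\pm1)=1$. For $-1<x<1$, $p_x$ is the unique polynomial of degree at most $\sum_{u\in S_x}I(u)-2$ with $p_x(u)=1$ for $u\in S_x\cap[-1,x]$, $p_x(u)=0$ for $u\in S_x\cap(x,1]$, and $p_x'(u)=0$ for $u\in(S_x\setminus\{x\})\cap(-1,1)$; $\underline{p}_x$ is the unique polynomial of degree at most $\sum_{u\in S_x}I(u)-2$ with $\underline{p}_x(u)=1$ for $u\in S_x\cap[-1,x)$, $\underline{p}_x(u)=0$ for $u\in S_x\cap[x,1]$, and $\underline{p}_x'(u)=0$ for $u\in(S_x\setminus\{x\})\cap(-1,1)$. *)

theory Defs
  imports "HOL-Analysis.Analysis" "HOL-Computational_Algebra.Polynomial"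
begin

definition wip :: "(real \<Rightarrow> real) \<Rightarrow> real poly \<Rightarrow> real poly \<Rightarrow> real" where
  "wip w p q = integral {-1..1} (\<lambda>t. w t * poly p t * poly q t)"

definition is_orthonormal_poly :: "(real \<Rightarrow> real) \<Rightarrow> nat \<Rightarrow> real poly \<Rightarrow> bool" where
  "is_orthonormal_poly w n p \<longleftrightarrow>
     degree p = n \<and> lead_coeff p > 0 \<and>
     (\<forall>q. degree q < n \<longrightarrow> wip w p q = 0) \<and> wip w p p = 1"

definition phi :: "(real \<Rightarrow> real) \<Rightarrow> nat \<Rightarrow> real poly" where
  "phi w n = (THE p. is_orthonormal_poly w n p)"

definition psi :: "(real \<Rightarrow> real) \<Rightarrow> nat \<Rightarrow> real poly" where
  "psi w n = (THE p. is_orthonormal_poly (\<lambda>t. (1 - t\<^sup>2) * w t) (n - 1) p)"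

definition Pa :: "(real \<Rightarrow> real) \<Rightarrow> nat \<Rightarrow> real \<Rightarrow> real poly" where
  "Pa w n a = (if a \<ge> 0 then phi w n - smult a ([:1, -1:] * psi w n)
               else phi w n - smult a ([:1, 1:] * psi w n))"

definition xi_set :: "(real \<Rightarrow> real) \<Rightarrow> nat \<Rightarrow> real \<Rightarrow> real set" where
  "xi_set w n a = {t. poly (Pa w n a) t = 0}"

definition node_set :: "(real \<Rightarrow> real) \<Rightarrow> nat \<Rightarrow> real \<Rightarrow> real set" where
  "node_set w n a = (if a = 0 then xi_set w n 0
                     else if a > 0 then insert (-1) (xi_set w n a)
                     else insert 1 (xi_set w n a))"

definition eta_set :: "(real \<Rightarrow> real) \<Rightarrow> nat \<Rightarrow> real set" where
  "eta_set w n = {t. poly ([:1, 0, -1:] * psi w n) t = 0}"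

definition node_sets :: "(real \<Rightarrow> real) \<Rightarrow> nat \<Rightarrow> real set set" where
  "node_sets w n = insert (eta_set w n) (range (node_set w n))"

definition Sx :: "(real \<Rightarrow> real) \<Rightarrow> nat \<Rightarrow> real \<Rightarrow> real set" where
  "Sx w n x = (THE S. S \<in> node_sets w n \<and> x \<in> S)"

definition Imult :: "real \<Rightarrow> int" where
  "Imult u = (if u = -1 \<or> u = 1 then 1 else 2)"

definition p_up :: "(real \<Rightarrow> real) \<Rightarrow> nat \<Rightarrow> real \<Rightarrow> real poly" where
  "p_up w n x = (THE p. int (degree p) \<le> (\<Sum>u\<in>Sx w n x. Imult u) - 2 \<and>
      (\<forall>u \<in> Sx w n x \<inter> {-1..x}. poly p u = 1) \<and>
      (\<forall>u \<in> Sx w n x \<inter> {x<..1}. poly p u = 0) \<and>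
      (\<forall>u \<in> (Sx w n x - {x}) \<inter> {-1<..<1}. poly (pderiv p) u = 0))"

definition p_low :: "(real \<Rightarrow> real) \<Rightarrow> nat \<Rightarrow> real \<Rightarrow> real poly" where
  "p_low w n x = (THE p. int (degree p) \<le> (\<Sum>u\<in>Sx w n x. Imult u) - 2 \<and>
      (\<forall>u \<in> Sx w n x \<inter> {-1..<x}. poly p u = 1) \<and>
      (\<forall>u \<in> Sx w n x \<inter> {x..1}. poly p u = 0) \<and>
      (\<forall>u \<in> (Sx w n x - {x}) \<inter> {-1<..<1}. poly (pderiv p) u = 0))"

end

(*
  The node set S_x is well defined and lies in [-1,1]: the zeros of P_a are in (-1,1) by the
  classical orthogonality argument, and every x in (-1,1) is a zero of exactly one of psi and
  the P_a, because phi and psi have no common zero.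

  p_x is the Hermite interpolant of the step function of [-1,x] at S_x, with double nodes at the
  interior nodes other than x. By Rolle, p_x' vanishes once inside every gap between consecutive
  nodes except the gap right of x; together with the double nodes these are as many zeros as the
  degree of p_x' allows, so they are all its zeros and all are simple. Hence p_x' changes sign
  exactly there. Right of x, p_x falls from 1 to 0; propagating the signs outwards shows that in
  every other gap p_x rises and falls back to its (equal) values at the two nodes, and that p_x
  is monotone beyond the extreme nodes. This gives p_x >= chi_[-1,x] and the endpoint signs.
  The lower polynomial reduces to the upper one through t -> -t.
*)

theory Submission
  imports Defs
begin

section \<open>Weights and the weighted inner product\<close>

definition admissible_weight :: "(real \<Rightarrow> real) \<Rightarrow> bool" where
  "admissible_weight v \<longleftrightarrow>
     (\<forall>t\<in>{-1..1}. v t \<ge> 0) \<and> v integrable_on {-1..1} \<and> integral {-1..1} v \<noteq> 0"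

lemma admissible_weight_integrable_continuous:
  assumes "admissible_weight v" "continuous_on {-1..1} f"
  shows "(\<lambda>t. v t * f t) integrable_on {-1..1}"
proof -
  have v: "v absolutely_integrable_on {-1..1}"
    using assms(1) unfolding admissible_weight_def by (auto intro: nonnegative_absolutely_integrable_1)
  have "(\<lambda>t. f t * v t) absolutely_integrable_on {-1..1}"
  proof (rule absolutely_integrable_bounded_measurable_product_real)
    show "f \<in> borel_measurable (lebesgue_on {-1..1})"
      using assms(2) by (intro continuous_imp_measurable_on_sets_lebesgue) auto
    show "bounded (f ` {-1..1})"
      using assms(2) by (intro compact_imp_bounded compact_continuous_image) auto
  qed (use v in auto)
  then show ?thesis
    by (auto dest: set_lebesgue_integral_eq_integral simp: mult.commute)
qed

lemma admissible_weight_integrable_poly: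
  assumes "admissible_weight v"
  shows "(\<lambda>t. v t * poly p t) integrable_on {-1..1}"
  by (rule admissible_weight_integrable_continuous[OF assms]) (auto intro: continuous_intros)

text \<open>A nonzero polynomial vanishes only on a null set.\<close>

lemma admissible_weight_integral_poly_pos:
  assumes v: "admissible_weight v" and h: "h \<noteq> 0"
    and h_nonneg: "\<And>t. t \<in> {-1<..<1} \<Longrightarrow> poly h t \<ge> 0"
  shows "integral {-1..1} (\<lambda>t. v t * poly h t) > 0"
proof -
  have v_nonneg: "\<And>t. t \<in> {-1..1} \<Longrightarrow> v t \<ge> 0" and v_int: "v integrable_on {-1..1}"
    and v_mass: "integral {-1..1} v \<noteq> 0" using v unfolding admissible_weight_def by auto
  have "poly h t \<ge> 0" if "t \<in> {-1..1}" for t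
  proof -
    have "continuous_on {-1..1} (poly h)" by (intro continuous_intros)
    then show ?thesis
      using continuous_ge_on_closure[of "{-1<..<(1::real)}" "poly h" t 0] h_nonneg that by auto
  qed
  then have nonneg: "\<And>t. t \<in> {-1..1} \<Longrightarrow> v t * poly h t \<ge> 0" using v_nonneg by auto
  have int: "(\<lambda>t. v t * poly h t) integrable_on {-1..1}"
    by (rule admissible_weight_integrable_poly[OF v])
  show ?thesis
  proof (rule ccontr)
    assume "\<not> ?thesis"
    then have zero: "integral {-1..1} (\<lambda>t. v t * poly h t) = 0"
      using integral_nonneg[OF int nonneg] by auto
    have abs_int: "(\<lambda>t. v t * poly h t) absolutely_integrable_on {-1..1}"
      using int nonneg by (intro nonnegative_absolutely_integrable_1) auto
    then have "set_lebesgue_integral lebesgue {-1..1} (\<lambda>t. v t * poly h t) = 0"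
      using zero set_lebesgue_integral_eq_integral(2)[of "{-1..1}" "\<lambda>t. v t * poly h t"] by simp
    then have "AE t in lebesgue. indicator {-1..1} t *\<^sub>R (v t * poly h t) = 0"
      unfolding set_lebesgue_integral_def
      by (subst (asm) integral_nonneg_eq_0_iff_AE)
         (use abs_int nonneg in \<open>auto simp: set_integrable_def indicator_def\<close>)
    moreover have "AE t in lebesgue. t \<notin> {t. poly h t = 0}"
    proof (rule AE_not_in)
      have "finite {t. poly h t = 0}" using h by (simp add: poly_roots_finite)
      then show "{t. poly h t = 0} \<in> null_sets lebesgue"
        by (simp add: finite_imp_null_set_lborel null_sets_completionI)
    qed
    ultimately have "AE t in lebesgue. indicator {-1..1} t *\<^sub>R v t = 0"
      by eventually_elim (auto simp: indicator_def)
    then have "set_lebesgue_integral lebesgue {-1..1} v = 0"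
      unfolding set_lebesgue_integral_def by (rule integral_eq_zero_AE)
    moreover have "v absolutely_integrable_on {-1..1}"
      using v_int v_nonneg by (intro nonnegative_absolutely_integrable_1) auto
    ultimately show False
      using set_lebesgue_integral_eq_integral(2) v_mass by metis
  qed
qed

lemma admissible_weight_one_minus_square:
  assumes v: "admissible_weight v"
  shows "admissible_weight (\<lambda>t. (1 - t\<^sup>2) * v t)"
proof -
  have square_le: "t\<^sup>2 \<le> 1" if "-1 \<le> t" "t \<le> 1" for t :: real
    using that by (simp add: abs_square_le_1 abs_le_iff)
  have eq: "\<And>t. (1 - t\<^sup>2) * v t = v t * poly [:1,0,-1:] t"
    by (simp add: power2_eq_square algebra_simps)
  have "integral {-1..1} (\<lambda>t. v t * poly [:1,0,-1:] t) > 0"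
    by (rule admissible_weight_integral_poly_pos[OF v])
       (use square_le in \<open>auto simp: power2_eq_square\<close>)
  moreover have "(\<lambda>t. v t * poly [:1,0,-1:] t) integrable_on {-1..1}"
    by (rule admissible_weight_integrable_poly[OF v])
  moreover have "\<forall>t\<in>{-1..1}. (1 - t\<^sup>2) * v t \<ge> 0"
    using v square_le unfolding admissible_weight_def by auto
  ultimately show ?thesis unfolding admissible_weight_def eq by auto
qed

lemma wip_commute: "wip v p q = wip v q p"
  by (simp add: wip_def mult_ac)

lemma wip_cong:
  "(\<And>t. poly p t * poly q t = poly p' t * poly q' t) \<Longrightarrow> wip v p q = wip v p' q'"
  unfolding wip_def by (rule arg_cong[where f="integral _"]) (auto simp: mult.assoc)

lemma wip_integrable:
  assumes "admissible_weight v"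
  shows "(\<lambda>t. v t * poly p t * poly q t) integrable_on {-1..1}"
  using admissible_weight_integrable_poly[OF assms, of "p * q"] by (simp add: mult.assoc)

lemma wip_add_right:
  assumes "admissible_weight v"
  shows "wip v p (q + r) = wip v p q + wip v p r"
  unfolding wip_def using integral_add[OF wip_integrable[OF assms] wip_integrable[OF assms]]
  by (simp add: algebra_simps)

lemma wip_diff_right:
  assumes "admissible_weight v"
  shows "wip v p (q - r) = wip v p q - wip v p r"
  unfolding wip_def using integral_diff[OF wip_integrable[OF assms] wip_integrable[OF assms]]
  by (simp add: algebra_simps)

lemma wip_smult_right: "wip v p (smult c q) = c * wip v p q"
proof -
  have "wip v p (smult c q) = integral {-1..1} (\<lambda>t. c *\<^sub>R (v t * poly p t * poly q t))"
    unfolding wip_def by (simp add: algebra_simps)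
  then show ?thesis unfolding wip_def by simp
qed

lemma wip_0_right [simp]: "wip v p 0 = 0"
  by (simp add: wip_def)

lemma wip_sum_right:
  assumes "admissible_weight v" "finite I"
  shows "wip v p (\<Sum>i\<in>I. f i) = (\<Sum>i\<in>I. wip v p (f i))"
  using assms(2) by (induction I rule: finite_induct) (auto simp: wip_add_right[OF assms(1)])

lemma wip_self_pos:
  assumes "admissible_weight v" "p \<noteq> 0"
  shows "wip v p p > 0"
  using admissible_weight_integral_poly_pos[OF assms(1), of "p * p"] assms(2)
  unfolding wip_def by (simp add: mult.assoc)

lemma wip_one_minus_square:
  "wip (\<lambda>t. (1 - t\<^sup>2) * v t) p q = wip v p ([:1,0,-1:] * q)"
  unfolding wip_def
  by (rule arg_cong[where f="integral _"]) (auto simp: power2_eq_square algebra_simps)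

section \<open>Orthonormal polynomials\<close>

lemma orthonormal_poly_orthogonal:
  "is_orthonormal_poly v m p \<Longrightarrow> q = 0 \<or> degree q < m \<Longrightarrow> wip v p q = 0"
  unfolding is_orthonormal_poly_def by auto

lemma degree_less_if_coeff_zero:
  fixes r :: "'a::zero poly"
  assumes "degree r \<le> m" "coeff r m = 0"
  shows "r = 0 \<or> degree r < m"
  using assms by (metis le_neq_implies_less leading_coeff_0_iff)

lemma wip_orthonormal_same_degree:
  assumes v: "admissible_weight v" and p: "is_orthonormal_poly v m p" and q: "degree q = m"
  shows "wip v p q = lead_coeff q / lead_coeff p"
proof -
  have deg: "degree p = m" and lead: "lead_coeff p > 0" and norm: "wip v p p = 1"
    using p unfolding is_orthonormal_poly_def by auto
  define c where "c = lead_coeff q / lead_coeff p"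
  define r where "r = q - smult c p"
  have "r = 0 \<or> degree r < m"
    by (rule degree_less_if_coeff_zero)
       (use q deg lead in \<open>auto simp: r_def c_def degree_diff_le\<close>)
  then have "wip v p r = 0" by (rule orthonormal_poly_orthogonal[OF p])
  moreover have "q = r + smult c p" unfolding r_def by simp
  ultimately have "wip v p q = c * wip v p p"
    by (simp add: wip_add_right[OF v] wip_smult_right)
  then show ?thesis using norm c_def by simp
qed

lemma orthonormal_poly_unique:
  assumes v: "admissible_weight v"
    and p: "is_orthonormal_poly v m p" and q: "is_orthonormal_poly v m q"
  shows "p = q"
proof -
  have dp: "degree p = m" and lp: "lead_coeff p > 0" and dq: "degree q = m" and lq: "lead_coeff q > 0"
    using p q unfolding is_orthonormal_poly_def by auto
  have "lead_coeff q / lead_coeff p = lead_coeff p / lead_coeff q"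
    using wip_orthonormal_same_degree[OF v p dq] wip_orthonormal_same_degree[OF v q dp]
    by (simp add: wip_commute)
  then have "lead_coeff q * lead_coeff q = lead_coeff p * lead_coeff p"
    using lp lq by (subst (asm) frac_eq_eq) auto
  then have "(lead_coeff p - lead_coeff q) * (lead_coeff p + lead_coeff q) = 0"
    by (simp add: algebra_simps)
  then have lead: "lead_coeff p = lead_coeff q" using lp lq by simp
  define r where "r = p - q"
  have r: "r = 0 \<or> degree r < m"
    by (rule degree_less_if_coeff_zero) (use dp dq lead in \<open>auto simp: r_def degree_diff_le\<close>)
  have "wip v r r = wip v p r - wip v q r"
    unfolding r_def by (simp add: wip_commute[of v "p - q"] wip_diff_right[OF v])
  also have "\<dots> = 0"
    using orthonormal_poly_orthogonal[OF p r] orthonormal_poly_orthogonal[OF q r] by simp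
  finally have "r = 0" using wip_self_pos[OF v, of r] by fastforce
  then show ?thesis unfolding r_def by simp
qed

definition monic_orthogonal_poly :: "(real \<Rightarrow> real) \<Rightarrow> nat \<Rightarrow> real poly \<Rightarrow> bool" where
  "monic_orthogonal_poly v k e \<longleftrightarrow>
     degree e = k \<and> lead_coeff e = 1 \<and> (\<forall>q. degree q < k \<longrightarrow> wip v e q = 0)"

lemma orthogonal_to_lower_degrees:
  assumes v: "admissible_weight v" and E: "\<And>i. i < k \<Longrightarrow> monic_orthogonal_poly v i (E i)"
    and orth: "\<And>i. i < k \<Longrightarrow> wip v e (E i) = 0"
  shows "degree q < k \<Longrightarrow> wip v e q = 0"
proof (induction "degree q" arbitrary: q rule: less_induct)
  case less
  show ?case
  proof (cases "q = 0")
    case False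
    define d where "d = degree q"
    have Ed: "degree (E d) = d" "lead_coeff (E d) = 1"
      using E[of d] less(2) unfolding d_def monic_orthogonal_poly_def by auto
    define r where "r = q - smult (lead_coeff q) (E d)"
    have "r = 0 \<or> degree r < d"
      by (rule degree_less_if_coeff_zero) (use Ed in \<open>auto simp: r_def d_def degree_diff_le\<close>)
    then have "wip v e r = 0" using less(1)[of r] less(2) d_def by auto
    moreover have "wip v e q = wip v e (r + smult (lead_coeff q) (E d))"
      unfolding r_def by simp
    ultimately show ?thesis
      using orth[of d] less(2) d_def by (simp add: wip_add_right[OF v] wip_smult_right)
  qed simp
qed

text \<open>Gram--Schmidt: subtract from \<open>X\<^sup>k\<close> its projections onto the monic orthogonal
  polynomials of lower degree.\<close>

lemma monic_orthogonal_poly_exists: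
  assumes v: "admissible_weight v"
  shows "\<exists>e. monic_orthogonal_poly v k e"
proof (induction k rule: less_induct)
  case (less k)
  define E where "E = (\<lambda>j. SOME e. monic_orthogonal_poly v j e)"
  have E: "monic_orthogonal_poly v j (E j)" if "j < k" for j
    unfolding E_def by (rule someI_ex[OF less[OF that]])
  have E_orth: "wip v (E j) (E i) = 0" if "j < k" "i < k" "i \<noteq> j" for i j
    using E[OF that(1)] E[OF that(2)] that(3) wip_commute[of v "E i" "E j"]
    unfolding monic_orthogonal_poly_def by (cases "i < j") auto
  have E_pos: "wip v (E i) (E i) > 0" if "i < k" for i
    using E[OF that] by (intro wip_self_pos[OF v]) (auto simp: monic_orthogonal_poly_def)
  define c where "c = (\<lambda>j. wip v (monom 1 k) (E j) / wip v (E j) (E j))"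
  define S where "S = (\<Sum>j<k. smult (c j) (E j))"
  define e where "e = monom 1 k - S"
  have "degree S < k \<or> S = 0"
  proof (cases "k = 0")
    case False
    have "degree S \<le> k - 1" unfolding S_def
      by (rule degree_sum_le)
         (use E False in \<open>auto simp: monic_orthogonal_poly_def intro: order.trans[OF degree_smult_le]\<close>)
    then show ?thesis using False by auto
  qed (simp add: S_def)
  then have ce: "coeff e k = 1" and "degree e \<le> k"
    unfolding e_def by (auto intro: coeff_eq_0 degree_diff_le simp: degree_monom_le)
  moreover have "degree e \<ge> k" using ce by (intro le_degree) simp
  ultimately have de: "degree e = k" and le: "lead_coeff e = 1" by auto
  have "wip v e (E i) = 0" if "i < k" for i
  proof -
    have "wip v e (E i) = wip v (E i) e" by (rule wip_commute)
    also have "\<dots> = wip v (E i) (monom 1 k) - (\<Sum>j<k. c j * wip v (E i) (E j))"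
      unfolding e_def S_def by (simp add: wip_diff_right[OF v] wip_sum_right[OF v] wip_smult_right)
    also have "(\<Sum>j<k. c j * wip v (E i) (E j)) = c i * wip v (E i) (E i)"
      by (rule sum.remove[THEN trans]) (use that E_orth wip_commute in \<open>auto intro!: sum.neutral\<close>)
    also have "wip v (E i) (monom 1 k) - c i * wip v (E i) (E i) = 0"
      unfolding c_def using E_pos[OF that] by (simp add: wip_commute)
    finally show ?thesis .
  qed
  then have "\<forall>q. degree q < k \<longrightarrow> wip v e q = 0"
    using orthogonal_to_lower_degrees[OF v E] by auto
  then show ?case using de le unfolding monic_orthogonal_poly_def by blast
qed

lemma orthonormal_poly_exists:
  assumes v: "admissible_weight v"
  shows "\<exists>p. is_orthonormal_poly v k p"
proof -
  obtain e where e: "monic_orthogonal_poly v k e" using monic_orthogonal_poly_exists[OF v] by blast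
  then have pos: "wip v e e > 0" by (intro wip_self_pos[OF v]) (auto simp: monic_orthogonal_poly_def)
  define c where "c = 1 / sqrt (wip v e e)"
  have c: "c > 0" unfolding c_def using pos by simp
  have "is_orthonormal_poly v k (smult c e)"
    unfolding is_orthonormal_poly_def
  proof (intro conjI allI impI)
    show "degree (smult c e) = k" "lead_coeff (smult c e) > 0"
      using e c unfolding monic_orthogonal_poly_def by auto
    show "wip v (smult c e) q = 0" if "degree q < k" for q
      using e that unfolding monic_orthogonal_poly_def
      by (simp add: wip_commute[of v "smult c e"] wip_smult_right wip_commute[of v e])
    have "wip v (smult c e) (smult c e) = c * c * wip v e e"
      by (simp add: wip_commute[of v "smult c e"] wip_smult_right)
    then show "wip v (smult c e) (smult c e) = 1" unfolding c_def using pos by simp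
  qed
  then show ?thesis by blast
qed

lemma is_orthonormal_poly_The:
  assumes "admissible_weight v"
  shows "is_orthonormal_poly v k (THE p. is_orthonormal_poly v k p)"
  using orthonormal_poly_exists[OF assms] orthonormal_poly_unique[OF assms] by (metis theI)


section \<open>Products of linear factors\<close>

definition root_poly :: "real set \<Rightarrow> real poly" where
  "root_poly Y = (\<Prod>z\<in>Y. [:-z, 1:])"

lemma root_poly_nonzero [simp]: "root_poly Y \<noteq> 0"
  by (cases "finite Y") (auto simp: root_poly_def prod_zero_iff)

lemma degree_root_poly: "finite Y \<Longrightarrow> degree (root_poly Y) = card Y"
  unfolding root_poly_def by (subst degree_prod_sum_eq) auto

lemma lead_coeff_root_poly [simp]: "lead_coeff (root_poly Y) = 1"
  unfolding root_poly_def by (simp add: lead_coeff_prod)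

lemma poly_root_poly: "poly (root_poly Y) t = (\<Prod>z\<in>Y. t - z)"
  unfolding root_poly_def by (simp add: poly_prod)

lemma poly_root_poly_eq_0_iff: "finite Y \<Longrightarrow> poly (root_poly Y) t = 0 \<longleftrightarrow> t \<in> Y"
  unfolding poly_root_poly by simp

lemma root_poly_insert: "finite Y \<Longrightarrow> z \<notin> Y \<Longrightarrow> root_poly (insert z Y) = [:-z, 1:] * root_poly Y"
  unfolding root_poly_def by simp

lemma root_poly_remove: "finite Y \<Longrightarrow> z \<in> Y \<Longrightarrow> root_poly Y = [:-z, 1:] * root_poly (Y - {z})"
  using root_poly_insert[of "Y - {z}" z] by (simp add: insert_absorb)

lemma root_poly_factor:
  "finite Z \<Longrightarrow> \<forall>z\<in>Z. poly f z = 0 \<Longrightarrow> \<exists>g. f = g * root_poly Z"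
proof (induction Z arbitrary: f rule: finite_induct)
  case empty
  then show ?case by (auto simp: root_poly_def)
next
  case (insert z Z)
  obtain f1 where f1: "f = [:-z, 1:] * f1"
    using insert.prems by (auto simp: poly_eq_0_iff_dvd elim: dvdE)
  have "\<forall>y\<in>Z. poly f1 y = 0" using insert f1 by auto
  then obtain g where "f1 = g * root_poly Z" using insert.IH by blast
  then show ?case using f1 insert
    by (intro exI[of _ g]) (simp add: root_poly_insert mult_ac del: mult_pCons_left mult_pCons_right)
qed

lemma poly_eq_smult_root_poly:
  assumes Y: "finite Y" "\<forall>z\<in>Y. poly P z = 0" and P: "P \<noteq> 0" and deg: "degree P \<le> card Y"
  shows "P = smult (lead_coeff P) (root_poly Y)" "degree P = card Y"
proof -
  obtain G where G: "P = G * root_poly Y" using root_poly_factor[OF Y] by blast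
  then have "G \<noteq> 0" using P by auto
  then have "degree P = degree G + card Y" using G degree_root_poly[OF Y(1)] by (simp add: degree_mult_eq)
  then have "degree G = 0" "degree P = card Y" using deg by auto
  then obtain c where "G = [:c:]" by (metis degree_0_id)
  then show "P = smult (lead_coeff P) (root_poly Y)" using G by simp
  show "degree P = card Y" by fact
qed

lemma root_poly_signs_at_endpoints:
  assumes Y: "finite Y" "Y \<subseteq> {-1<..<1}"
  shows "poly (root_poly Y) 1 > 0" "(-1) ^ card Y * poly (root_poly Y) (-1) > 0"
proof -
  show "poly (root_poly Y) 1 > 0" unfolding poly_root_poly using Y by (intro prod_pos) auto
  have "poly (root_poly Y) (-1) = (-1) ^ card Y * (\<Prod>z\<in>Y. 1 + z)"
    using prod_uminus[of "\<lambda>z. 1 + z" Y] by (simp add: poly_root_poly)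
  then have "(-1) ^ card Y * poly (root_poly Y) (-1) = ((-1) ^ card Y * (-1) ^ card Y) * (\<Prod>z\<in>Y. 1 + z)"
    by simp
  also have "\<dots> = (\<Prod>z\<in>Y. 1 + z)" by (simp add: power_mult_distrib[symmetric])
  also have "\<dots> > 0" using Y by (intro prod_pos) auto
  finally show "(-1) ^ card Y * poly (root_poly Y) (-1) > 0" .
qed

lemma poly_sign_product_parity:
  fixes f :: "real poly"
  assumes f: "f \<noteq> 0" and Z: "finite Z" "\<forall>z\<in>Z. poly f z = 0" and deg: "degree f \<le> card Z"
    and ab: "a < b" "a \<notin> Z" "b \<notin> Z"
  shows "poly f a \<noteq> 0" "poly f a * poly f b > 0 \<longleftrightarrow> even (card (Z \<inter> {a<..<b}))"
proof -
  have f_eq: "f = smult (lead_coeff f) (root_poly Z)" using poly_eq_smult_root_poly[OF Z f deg] by simp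
  have c: "lead_coeff f \<noteq> 0" using f by simp
  show "poly f a \<noteq> 0" using ab(2) c poly_root_poly_eq_0_iff[OF Z(1), of a] by (subst f_eq) simp
  define g where "g = (\<lambda>z. (a - z) * (b - z))"
  define M where "M = Z \<inter> {a<..<b}"
  have M: "finite M" "M \<subseteq> Z" using Z(1) unfolding M_def by auto
  have "poly f a * poly f b = (lead_coeff f * lead_coeff f) * (\<Prod>z\<in>Z. g z)"
    by (subst (1 2) f_eq) (simp add: poly_root_poly g_def prod.distrib mult_ac)
  also have "(\<Prod>z\<in>Z. g z) = (\<Prod>z\<in>Z - M. g z) * (\<Prod>z\<in>M. g z)"
    by (rule prod.subset_diff[OF M(2) Z(1)])
  also have "(\<Prod>z\<in>M. g z) = (-1) ^ card M * (\<Prod>z\<in>M. - g z)"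
    using prod_uminus[of "\<lambda>z. - g z" M] by simp
  finally have eq: "poly f a * poly f b =
      (lead_coeff f * lead_coeff f) * ((\<Prod>z\<in>Z - M. g z) * (\<Prod>z\<in>M. - g z)) * (-1) ^ card M"
    by (simp add: mult_ac)
  define Q where "Q = (lead_coeff f * lead_coeff f) * ((\<Prod>z\<in>Z - M. g z) * (\<Prod>z\<in>M. - g z))"
  have "(\<Prod>z\<in>Z - M. g z) > 0"
  proof (rule prod_pos)
    fix z assume "z \<in> Z - M"
    then have "z < a \<or> z > b" using ab unfolding M_def by (auto simp: not_less_iff_gr_or_eq)
    then show "g z > 0" unfolding g_def using ab(1) by (auto intro: mult_pos_pos mult_neg_neg)
  qed
  moreover have "(\<Prod>z\<in>M. - g z) > 0"
    by (rule prod_pos) (auto simp: M_def g_def mult_less_0_iff)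
  moreover have "lead_coeff f * lead_coeff f > 0" using c by (simp add: not_square_less_zero less_le)
  ultimately have "Q > 0" unfolding Q_def by simp
  then show "poly f a * poly f b > 0 \<longleftrightarrow> even (card (Z \<inter> {a<..<b}))"
    unfolding M_def[symmetric] eq Q_def[symmetric]
    by (cases "even (card M)") (auto simp: zero_less_mult_iff)
qed

definition constant_sign_on :: "real poly \<Rightarrow> real \<Rightarrow> real \<Rightarrow> bool" where
  "constant_sign_on p a b \<longleftrightarrow> (\<forall>t\<in>{a<..<b}. poly p t \<ge> 0) \<or> (\<forall>t\<in>{a<..<b}. poly p t \<le> 0)"

lemma constant_sign_on_if_no_root:
  assumes "\<And>t. t \<in> {a<..<b} \<Longrightarrow> poly p t \<noteq> 0"
  shows "constant_sign_on p a b"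
proof (rule ccontr)
  assume "\<not> constant_sign_on p a b"
  then obtain t1 t2 where t: "t1 \<in> {a<..<b}" "t2 \<in> {a<..<b}" "poly p t1 < 0" "poly p t2 > 0"
    unfolding constant_sign_on_def by (auto simp: not_le)
  have "t1 \<noteq> t2" using t by auto
  then have "poly p (min t1 t2) * poly p (max t1 t2) < 0" "min t1 t2 < max t1 t2"
    using t by (auto simp: min_def max_def mult_neg_pos mult_pos_neg)
  then obtain z where "min t1 t2 < z" "z < max t1 t2" "poly p z = 0"
    using poly_IVT by blast
  then show False using assms t by (auto simp: min_def max_def split: if_splits)
qed

text \<open>Multiplying by the linear factors of the roots of odd multiplicity in \<open>(a,b)\<close>
  produces a polynomial of constant sign there.\<close>

lemma root_poly_makes_constant_sign:
  "p \<noteq> 0 \<Longrightarrow> \<exists>Y. finite Y \<and> Y \<subseteq> {a<..<b} \<and> (\<forall>z\<in>Y. poly p z = 0) \<and>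
                constant_sign_on (p * root_poly Y) a b"
proof (induction "degree p" arbitrary: p rule: less_induct)
  case less
  show ?case
  proof (cases "\<exists>z\<in>{a<..<b}. poly p z = 0")
    case False
    then have "constant_sign_on p a b" by (intro constant_sign_on_if_no_root) auto
    then show ?thesis by (intro exI[of _ "{}"]) (auto simp: root_poly_def)
  next
    case True
    then obtain z where z: "z \<in> {a<..<b}" "poly p z = 0" by blast
    then obtain p1 where p1: "p = [:-z, 1:] * p1" by (auto simp: poly_eq_0_iff_dvd elim: dvdE)
    have p1_nz: "p1 \<noteq> 0" using less(2) p1 by auto
    have "degree p = 1 + degree p1" using p1 p1_nz by (simp add: degree_mult_eq del: mult_pCons_left)
    then obtain Y where Y: "finite Y" "Y \<subseteq> {a<..<b}" "\<forall>y\<in>Y. poly p1 y = 0"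
        "constant_sign_on (p1 * root_poly Y) a b"
      using less(1)[OF _ p1_nz] by auto
    have roots: "\<forall>y\<in>Y. poly p y = 0" using Y(3) p1 by simp
    show ?thesis
    proof (cases "z \<in> Y")
      case True
      have "root_poly Y = [:-z, 1:] * root_poly (Y - {z})" by (rule root_poly_remove[OF Y(1) True])
      then have "p * root_poly (Y - {z}) = p1 * root_poly Y"
        using p1 by (simp add: mult_ac del: mult_pCons_left mult_pCons_right)
      then show ?thesis using Y roots by (intro exI[of _ "Y - {z}"]) auto
    next
      case False
      have "poly (p * root_poly (insert z Y)) t = (t - z)\<^sup>2 * poly (p1 * root_poly Y) t" for t
      proof -
        have "poly (root_poly (insert z Y)) t = (t - z) * poly (root_poly Y) t"
          using Y(1) False by (simp add: poly_root_poly)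
        moreover have "poly p t = (t - z) * poly p1 t" unfolding p1 by (simp add: algebra_simps)
        ultimately show ?thesis by (simp add: power2_eq_square mult_ac)
      qed
      then have "constant_sign_on (p * root_poly (insert z Y)) a b"
        using Y(4) unfolding constant_sign_on_def by (auto intro: mult_nonneg_nonpos)
      then show ?thesis using Y roots z by (intro exI[of _ "insert z Y"]) auto
    qed
  qed
qed

lemma wip_nonzero_if_constant_sign:
  assumes v: "admissible_weight v" and h: "h \<noteq> 0" "constant_sign_on h (-1) 1"
    and g: "g \<noteq> 0" "\<And>t. t \<in> {-1<..<1} \<Longrightarrow> poly g t \<ge> 0"
  shows "wip v h g \<noteq> 0"
proof -
  have eq: "wip v h g = integral {-1..1} (\<lambda>t. v t * poly (g * h) t)"
    unfolding wip_def by (rule arg_cong[where f="integral _"]) (auto simp: mult_ac)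
  from h(2) consider "\<forall>t\<in>{-1<..<1}. poly h t \<ge> 0" | "\<forall>t\<in>{-1<..<1}. poly (- h) t \<ge> 0"
    unfolding constant_sign_on_def by auto
  then show ?thesis
  proof cases
    case 1
    then have "integral {-1..1} (\<lambda>t. v t * poly (g * h) t) > 0"
      using g h(1) by (intro admissible_weight_integral_poly_pos[OF v]) auto
    then show ?thesis using eq by simp
  next
    case 2
    have "poly (g * - h) t \<ge> 0" if "t \<in> {-1<..<1}" for t
      using 2 g(2)[OF that] that unfolding poly_mult by (intro mult_nonneg_nonneg) auto
    then have "integral {-1..1} (\<lambda>t. v t * poly (g * - h) t) > 0"
      using g(1) h(1) by (intro admissible_weight_integral_poly_pos[OF v]) auto
    then show ?thesis using eq by simp
  qed
qed

text \<open>The classical argument for zeros of orthogonal polynomials: if \<open>P\<close> had fewer than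
  \<open>m\<close> sign changes in \<open>(-1,1)\<close>, it would not be orthogonal to \<open>g\<close> times the product of the
  corresponding linear factors.\<close>

lemma orthogonal_poly_roots:
  assumes v: "admissible_weight v" and P: "P \<noteq> 0"
    and g: "g \<noteq> 0" "\<And>t. t \<in> {-1<..<1} \<Longrightarrow> poly g t \<ge> 0"
    and orth: "\<And>q. degree q < m \<Longrightarrow> wip v P (g * q) = 0"
  shows "\<exists>Y. finite Y \<and> Y \<subseteq> {-1<..<1} \<and> (\<forall>z\<in>Y. poly P z = 0) \<and> card Y \<ge> m"
proof -
  obtain Y where Y: "finite Y" "Y \<subseteq> {-1<..<1}" "\<forall>z\<in>Y. poly P z = 0"
      "constant_sign_on (P * root_poly Y) (-1) 1"
    using root_poly_makes_constant_sign[OF P, of "-1" 1] by blast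
  have "card Y \<ge> m"
  proof (rule ccontr)
    assume "\<not> card Y \<ge> m"
    then have "degree (root_poly Y) < m" by (simp add: degree_root_poly[OF Y(1)])
    then have "wip v P (g * root_poly Y) = 0" by (rule orth)
    moreover have "wip v P (g * root_poly Y) = wip v (P * root_poly Y) g"
      by (rule wip_cong) (simp add: mult_ac)
    ultimately show False using wip_nonzero_if_constant_sign[OF v _ Y(4) g] P by simp
  qed
  then show ?thesis using Y by blast
qed

text \<open>Dividing out the known zeros leaves a factor of degree at most one, whose signs at
  \<open>\<plusminus>1\<close> force its zero into \<open>(-1,1)\<close>.\<close>

lemma roots_inside_if_endpoint_signs:
  fixes P :: "real poly"
  assumes Y: "finite Y" "Y \<subseteq> {-1<..<1}" "\<forall>z\<in>Y. poly P z = 0" "card Y + 1 \<ge> n"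
    and deg: "degree P \<le> n" and pos1: "poly P 1 > 0" and posm1: "(-1) ^ n * poly P (-1) > 0"
    and t: "poly P t = 0"
  shows "-1 < t \<and> t < 1"
proof (cases "t \<in> Y")
  case True
  then show ?thesis using Y(2) by auto
next
  case False
  obtain G where G: "P = G * root_poly Y" using root_poly_factor[OF Y(1) Y(3)] by blast
  have "G \<noteq> 0" using G pos1 by auto
  then have deg_P: "degree P = degree G + card Y"
    using G degree_root_poly[OF Y(1)] by (simp add: degree_mult_eq)
  have Gt: "poly G t = 0" using t G False poly_root_poly_eq_0_iff[OF Y(1)] by auto
  note R = root_poly_signs_at_endpoints[OF Y(1,2)]
  have G1: "poly G 1 > 0" using pos1 R(1) G by (simp add: zero_less_mult_iff)
  have "degree G \<noteq> 0"
  proof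
    assume "degree G = 0"
    then have "G = [:coeff G 0:]" using degree_0_id[of G] by simp
    then show False
      using Gt \<open>G \<noteq> 0\<close> by (metis poly_pCons poly_0 mult_zero_right add_0_right pCons_eq_0_iff)
  qed
  then have cY: "card Y + 1 = n" and dG: "degree G = 1" using deg deg_P Y(4) by auto
  have "(-1) ^ n * poly P (-1) = - poly G (-1) * ((-1) ^ card Y * poly (root_poly Y) (-1))"
    unfolding G cY[symmetric] by simp
  then have "0 < - poly G (-1) * ((-1) ^ card Y * poly (root_poly Y) (-1))" using posm1 by simp
  from zero_less_mult_pos2[OF this R(2)] have Gm1: "poly G (-1) < 0" by simp
  have "G = [:coeff G 0, coeff G 1:]"
    by (rule poly_eqI) (use dG in \<open>auto simp: coeff_pCons coeff_eq_0 split: nat.split\<close>)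
  then obtain g0 g1 where "G = [:g0, g1:]" by blast
  then have e: "g0 + g1 > 0" "g0 - g1 < 0" "g0 + g1 * t = 0" using G1 Gm1 Gt by (simp_all add: mult.commute)
  then have "g1 > 0" by linarith
  moreover have "g1 * (1 - t) = g0 + g1" "g1 * (1 + t) = g1 - g0" using e(3) by (simp_all add: algebra_simps)
  then have "g1 * (1 - t) > 0" "g1 * (1 + t) > 0" using e by linarith+
  ultimately show ?thesis by (simp add: zero_less_mult_iff)
qed

section \<open>Hermite interpolation\<close>

lemma pderiv_linear_factor_at_root:
  fixes R :: "real poly"
  shows "poly (pderiv ([:-u, 1:] * R)) u = poly R u"
  by (simp add: pderiv_mult pderiv_pCons del: mult_pCons_left)

lemma pderiv_double_linear_factor_at_root:
  fixes R :: "real poly"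
  shows "poly (pderiv ([:-u, 1:] * ([:-u, 1:] * R))) u = 0"
  by (simp add: pderiv_mult pderiv_pCons del: mult_pCons_left)

definition hermite_fit :: "real set \<Rightarrow> real set \<Rightarrow> (real \<Rightarrow> real) \<Rightarrow> real poly \<Rightarrow> bool" where
  "hermite_fit A D f p \<longleftrightarrow> (\<forall>u\<in>A. poly p u = f u) \<and> (\<forall>u\<in>D. poly (pderiv p) u = 0)"

lemma lagrange_interpolant_exists:
  fixes f :: "real \<Rightarrow> real"
  shows "finite A \<Longrightarrow> \<exists>p. (p = 0 \<or> degree p < card A) \<and> (\<forall>u\<in>A. poly p u = f u)"
proof (induction A rule: finite_induct)
  case (insert v A)
  obtain p where p: "p = 0 \<or> degree p < card A" "\<forall>u\<in>A. poly p u = f u" using insert.IH by blast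
  have nz: "poly (root_poly A) v \<noteq> 0" using insert poly_root_poly_eq_0_iff by auto
  define c where "c = (f v - poly p v) / poly (root_poly A) v"
  define q where "q = p + smult c (root_poly A)"
  have "degree q \<le> card A"
    unfolding q_def using p(1) degree_root_poly[OF insert(1)]
    by (auto intro!: degree_add_le order.trans[OF degree_smult_le])
  then have "q = 0 \<or> degree q < card (insert v A)" using insert by auto
  moreover have "\<forall>u\<in>insert v A. poly q u = f u"
    unfolding q_def using p(2) nz insert poly_root_poly_eq_0_iff[OF insert(1)] by (auto simp: c_def)
  ultimately show ?case by blast
qed simp

lemma poly_pderiv_root_poly_mult_eq_0_iff:
  assumes A: "finite A" "D \<subseteq> A" "u \<in> A"
  shows "poly (pderiv (root_poly A * root_poly D)) u = 0 \<longleftrightarrow> u \<in> D"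
proof (cases "u \<in> D")
  case True
  have "finite D" using A finite_subset by auto
  have "root_poly A * root_poly D = [:-u, 1:] * ([:-u, 1:] * (root_poly (A - {u}) * root_poly (D - {u})))"
    using root_poly_remove[OF A(1,3)] root_poly_remove[OF \<open>finite D\<close> True]
    by (simp add: mult_ac del: mult_pCons_left)
  then show ?thesis using True pderiv_double_linear_factor_at_root by simp
next
  case False
  have "finite D" using A finite_subset by auto
  have "root_poly A * root_poly D = [:-u, 1:] * (root_poly (A - {u}) * root_poly D)"
    using root_poly_remove[OF A(1,3)] by (simp add: mult.assoc del: mult_pCons_left)
  then have "poly (pderiv (root_poly A * root_poly D)) u = poly (root_poly (A - {u}) * root_poly D) u"
    by (simp only: pderiv_linear_factor_at_root)
  then show ?thesis
    using False poly_root_poly_eq_0_iff[OF \<open>finite D\<close>] poly_root_poly_eq_0_iff[of "A - {u}"] A(1)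
    by simp
qed

text \<open>Each prescribed critical point \<open>u\<close> is added by a multiple of \<open>root_poly A * root_poly D\<close>,
  which vanishes on \<open>A\<close> and has vanishing derivative on \<open>D\<close> but not at \<open>u\<close>.\<close>

lemma hermite_interpolant_exists:
  assumes A: "finite A" and D: "D \<subseteq> A"
  shows "\<exists>p. (p = 0 \<or> degree p < card A + card D) \<and> hermite_fit A D f p"
proof -
  have "finite D" using A D finite_subset by auto
  then show ?thesis using D
  proof (induction D rule: finite_induct)
    case empty
    then show ?case using lagrange_interpolant_exists[OF A, of f] unfolding hermite_fit_def by auto
  next
    case (insert u D)
    obtain p where p: "p = 0 \<or> degree p < card A + card D" "hermite_fit A D f p" using insert by auto
    define \<omega> where "\<omega> = root_poly A * root_poly D"
    have crit_\<omega>: "poly (pderiv \<omega>) v = 0 \<longleftrightarrow> v \<in> D" if "v \<in> insert u D" for v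
      unfolding \<omega>_def using poly_pderiv_root_poly_mult_eq_0_iff[OF A] insert that by auto
    define c where "c = - poly (pderiv p) u / poly (pderiv \<omega>) u"
    define q where "q = p + smult c \<omega>"
    have "degree \<omega> = card A + card D"
      unfolding \<omega>_def using degree_root_poly A insert(1) by (simp add: degree_mult_eq)
    then have "degree q \<le> card A + card D"
      unfolding q_def using p(1) by (auto intro!: degree_add_le order.trans[OF degree_smult_le])
    then have "q = 0 \<or> degree q < card A + card (insert u D)" using insert by auto
    moreover have "\<forall>v\<in>A. poly \<omega> v = 0" using poly_root_poly_eq_0_iff[OF A] by (simp add: \<omega>_def)
    then have "hermite_fit A (insert u D) f q"
      using p(2) crit_\<omega> insert(2) unfolding hermite_fit_def q_def c_def
      by (auto simp: pderiv_add pderiv_diff pderiv_smult)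
    ultimately show ?case by blast
  qed
qed

lemma hermite_interpolant_unique:
  assumes A: "finite A" and D: "D \<subseteq> A"
    and p: "p = 0 \<or> degree p < card A + card D" "hermite_fit A D f p"
    and q: "q = 0 \<or> degree q < card A + card D" "hermite_fit A D f q"
  shows "p = q"
proof (rule ccontr)
  assume "p \<noteq> q"
  define d where "d = p - q"
  have "d \<noteq> 0" using \<open>p \<noteq> q\<close> d_def by auto
  have "finite D" using A D finite_subset by auto
  have deg_d: "degree d < card A + card D"
    using p(1) q(1) \<open>d \<noteq> 0\<close> degree_diff_le_max[of p q] unfolding d_def by auto
  have "\<forall>u\<in>A. poly d u = 0" using p(2) q(2) unfolding hermite_fit_def d_def by auto
  then obtain G where G: "d = G * root_poly A" using root_poly_factor[OF A] by blast
  have "poly G u = 0" if u: "u \<in> D" for u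
  proof -
    have "d = [:-u, 1:] * (G * root_poly (A - {u}))"
      using G root_poly_remove[OF A] u D by (auto simp: mult_ac simp del: mult_pCons_left)
    then have "poly (pderiv d) u = poly (G * root_poly (A - {u})) u"
      by (simp only: pderiv_linear_factor_at_root)
    then have "poly (pderiv d) u = poly G u * poly (root_poly (A - {u})) u" by simp
    moreover have "poly (pderiv d) u = 0"
      using p(2) q(2) u unfolding hermite_fit_def d_def by (auto simp: pderiv_diff)
    moreover have "poly (root_poly (A - {u})) u \<noteq> 0"
      using poly_root_poly_eq_0_iff[of "A - {u}" u] A by auto
    ultimately show "poly G u = 0" by auto
  qed
  then obtain H where H: "G = H * root_poly D" using root_poly_factor[OF \<open>finite D\<close>] by blast
  then have "H \<noteq> 0" using \<open>d \<noteq> 0\<close> G by auto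
  then have "degree d = degree H + card D + card A"
    using G H degree_root_poly[OF A] degree_root_poly[OF \<open>finite D\<close>] by (simp add: degree_mult_eq)
  then show False using deg_d by auto
qed

lemma hermite_interpolant_The:
  assumes A: "finite A" and D: "D \<subseteq> A" and N: "1 \<le> card A + card D"
    and Q: "\<And>p. Q p \<longleftrightarrow> degree p < card A + card D \<and> hermite_fit A D f p"
  shows "degree (THE p. Q p) < card A + card D \<and> hermite_fit A D f (THE p. Q p)"
proof -
  obtain p0 where p0: "p0 = 0 \<or> degree p0 < card A + card D" "hermite_fit A D f p0"
    using hermite_interpolant_exists[OF A D] by blast
  have "Q p0" using p0 N Q by auto
  moreover have "p = p0" if "Q p" for p
    using hermite_interpolant_unique[OF A D, of p f p0] p0 Q that by auto
  ultimately have "Q (THE p. Q p)" by (rule theI)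
  then show ?thesis using Q by blast
qed


lemma orthonormal_poly_signs:
  assumes v: "admissible_weight v" and p: "is_orthonormal_poly v m p"
  shows "poly p 1 > 0" "(-1) ^ m * poly p (-1) > 0" "poly p t = 0 \<Longrightarrow> -1 < t \<and> t < 1"
proof -
  have deg: "degree p = m" and lead: "lead_coeff p > 0" and orth: "\<forall>q. degree q < m \<longrightarrow> wip v p q = 0"
    using p unfolding is_orthonormal_poly_def by auto
  then have "p \<noteq> 0" by auto
  obtain Y where Y: "finite Y" "Y \<subseteq> {-1<..<1}" "\<forall>z\<in>Y. poly p z = 0" "card Y \<ge> m"
    using orthogonal_poly_roots[OF v \<open>p \<noteq> 0\<close>, of 1 m] orth by auto
  then have p_eq: "p = smult (lead_coeff p) (root_poly Y)" and card: "card Y = m"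
    using poly_eq_smult_root_poly[OF Y(1,3) \<open>p \<noteq> 0\<close>] deg by auto
  note R = root_poly_signs_at_endpoints[OF Y(1,2)]
  show "poly p 1 > 0" using R(1) lead by (subst p_eq) simp
  have "(-1) ^ m * poly p (-1) = lead_coeff p * ((-1) ^ card Y * poly (root_poly Y) (-1))"
    using card by (subst p_eq) simp
  then show "(-1) ^ m * poly p (-1) > 0" using R(2) lead by simp
  show "poly p t = 0 \<Longrightarrow> -1 < t \<and> t < 1"
    using Y(2) lead poly_root_poly_eq_0_iff[OF Y(1), of t] by (subst (asm) p_eq) auto
qed

section \<open>The node sets\<close>

locale weight_setting =
  fixes w :: "real \<Rightarrow> real" and n :: nat
  assumes admissible: "admissible_weight w" and n_pos: "n \<ge> 1"
begin

abbreviation "\<phi> \<equiv> phi w n"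
abbreviation "\<psi> \<equiv> psi w n"

lemma admissible_psi_weight: "admissible_weight (\<lambda>t. (1 - t\<^sup>2) * w t)"
  by (rule admissible_weight_one_minus_square[OF admissible])

lemma phi_orthonormal: "is_orthonormal_poly w n \<phi>"
  unfolding phi_def by (rule is_orthonormal_poly_The[OF admissible])

lemma psi_orthonormal: "is_orthonormal_poly (\<lambda>t. (1 - t\<^sup>2) * w t) (n - 1) \<psi>"
  unfolding psi_def by (rule is_orthonormal_poly_The[OF admissible_psi_weight])

lemma degree_phi: "degree \<phi> = n" and lead_coeff_phi_pos: "lead_coeff \<phi> > 0"
  using phi_orthonormal unfolding is_orthonormal_poly_def by auto

lemma degree_psi: "degree \<psi> = n - 1" and lead_coeff_psi_pos: "lead_coeff \<psi> > 0"
  using psi_orthonormal unfolding is_orthonormal_poly_def by auto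

lemma phi_nonzero: "\<phi> \<noteq> 0" and psi_nonzero: "\<psi> \<noteq> 0"
  using lead_coeff_phi_pos lead_coeff_psi_pos by auto

lemmas phi_signs = orthonormal_poly_signs[OF admissible phi_orthonormal]
lemmas psi_signs = orthonormal_poly_signs[OF admissible_psi_weight psi_orthonormal]

lemma poly_Pa:
  "poly (Pa w n a) t =
     (if a \<ge> 0 then poly \<phi> t - a * (1 - t) * poly \<psi> t else poly \<phi> t - a * (1 + t) * poly \<psi> t)"
  unfolding Pa_def by (simp add: algebra_simps)

lemma degree_Pa_le: "degree (Pa w n a) \<le> n"
proof -
  have "degree ([:1,-1:] * \<psi>) \<le> n" "degree ([:1,1:] * \<psi>) \<le> n"
    using degree_mult_le[of "[:1,-1:]" \<psi>] degree_mult_le[of "[:1,1:]" \<psi>] degree_psi n_pos by auto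
  then show ?thesis unfolding Pa_def using degree_phi
    by (auto intro!: degree_diff_le order.trans[OF degree_smult_le] simp del: mult_pCons_left)
qed

lemma Pa_signs: "poly (Pa w n a) 1 > 0" "(-1) ^ n * poly (Pa w n a) (-1) > 0"
proof -
  have flip: "(-1::real) ^ n = - ((-1) ^ (n - 1))" using n_pos by (cases n) auto
  have "- a * 2 * poly \<psi> 1 \<ge> 0" if "\<not> a \<ge> 0"
    using that psi_signs(1) by (simp add: mult_nonpos_nonneg)
  then show "poly (Pa w n a) 1 > 0" using phi_signs(1) by (auto simp: poly_Pa algebra_simps)
  show "(-1) ^ n * poly (Pa w n a) (-1) > 0"
  proof (cases "a \<ge> 0")
    case True
    then have "(-1) ^ n * poly (Pa w n a) (-1) =
        (-1) ^ n * poly \<phi> (-1) + 2 * a * ((-1) ^ (n - 1) * poly \<psi> (-1))"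
      unfolding poly_Pa flip by (simp add: algebra_simps)
    moreover have "2 * a * ((-1) ^ (n - 1) * poly \<psi> (-1)) \<ge> 0" using True psi_signs(2) by simp
    ultimately show ?thesis using phi_signs(2) by linarith
  qed (use phi_signs(2) in \<open>simp add: poly_Pa\<close>)
qed

lemma Pa_nonzero: "Pa w n a \<noteq> 0"
  using Pa_signs(1)[of a] by auto

text \<open>This gives \<open>n - 1\<close> zeros of \<open>P\<^sub>a\<close> in \<open>(-1,1)\<close>; its signs at \<open>\<plusminus>1\<close> place the last one
  there as well.\<close>

lemma Pa_orthogonal:
  assumes q: "degree q < n - 1"
  shows "wip w (Pa w n a) ((if a \<ge> 0 then [:1,1:] else [:1,-1:]) * q) = 0"
proof -
  define g where "g = (if a \<ge> 0 then [:1,1:] else ([:1,-1:] :: real poly))"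
  define h where "h = (if a \<ge> 0 then [:1,-1:] else ([:1,1:] :: real poly))"
  have Pa: "Pa w n a = \<phi> - smult a (h * \<psi>)" unfolding Pa_def h_def by auto
  have "degree (g * q) < n \<or> g * q = 0"
  proof (cases "q = 0")
    case False
    have "degree (g * q) \<le> degree g + degree q" by (rule degree_mult_le)
    moreover have "degree g \<le> 1" unfolding g_def by auto
    ultimately show ?thesis using q by auto
  qed simp
  then have "wip w \<phi> (g * q) = 0" using orthonormal_poly_orthogonal[OF phi_orthonormal] by auto
  moreover have "wip w (g * q) (h * \<psi>) = wip w \<psi> ([:1,0,-1:] * q)"
    by (rule wip_cong) (auto simp: g_def h_def algebra_simps)
  moreover have "wip w \<psi> ([:1,0,-1:] * q) = 0"
    using wip_one_minus_square[of w \<psi> q] orthonormal_poly_orthogonal[OF psi_orthonormal] q by auto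
  ultimately have "wip w (g * q) (Pa w n a) = 0"
    unfolding Pa by (simp add: wip_diff_right[OF admissible] wip_smult_right wip_commute[of w "g*q" \<phi>])
  then show ?thesis unfolding g_def[symmetric] using wip_commute[of w "Pa w n a" "g * q"] by simp
qed

lemma Pa_roots_inside: "poly (Pa w n a) t = 0 \<Longrightarrow> -1 < t \<and> t < 1"
proof -
  define g where "g = (if a \<ge> 0 then [:1,1:] else ([:1,-1:] :: real poly))"
  have g_nonzero: "g \<noteq> 0" unfolding g_def by auto
  have g_nonneg: "poly g t \<ge> 0" if "t \<in> {-1<..<1}" for t
    using that unfolding g_def by (cases "a \<ge> 0") auto
  have orth: "wip w (Pa w n a) (g * q) = 0" if "degree q < n - 1" for q
    using Pa_orthogonal[OF that, of a] unfolding g_def .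
  obtain Y where Y: "finite Y" "Y \<subseteq> {-1<..<1}" "\<forall>z\<in>Y. poly (Pa w n a) z = 0" "card Y \<ge> n - 1"
    using orthogonal_poly_roots[OF admissible Pa_nonzero g_nonzero g_nonneg orth] by metis
  then have "card Y + 1 \<ge> n" by simp
  from roots_inside_if_endpoint_signs[OF Y(1,2,3) this degree_Pa_le Pa_signs]
  show "poly (Pa w n a) t = 0 \<Longrightarrow> -1 < t \<and> t < 1" .
qed

text \<open>For a common zero \<open>x\<close>, the inner product of \<open>\<psi>\<close> and \<open>\<phi>/(t - x)\<close> with respect to
  \<open>(1 - t\<^sup>2) w\<close> equals that of \<open>\<phi>\<close> and \<open>(1 - t\<^sup>2) \<psi>/(t - x)\<close> with respect to \<open>w\<close>;
  orthogonality evaluates the first as \<open>lead \<phi> / lead \<psi> > 0\<close> and the second as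
  \<open>- lead \<psi> / lead \<phi> < 0\<close>.\<close>

lemma phi_psi_no_common_root: "\<not> (poly \<phi> x = 0 \<and> poly \<psi> x = 0)"
proof
  assume "poly \<phi> x = 0 \<and> poly \<psi> x = 0"
  then obtain A B where A: "\<phi> = [:-x,1:] * A" and B: "\<psi> = [:-x,1:] * B"
    by (meson dvdE poly_eq_0_iff_dvd)
  have "A \<noteq> 0" "B \<noteq> 0" using A B phi_nonzero psi_nonzero by auto
  have dA: "degree A = n - 1" using A \<open>A \<noteq> 0\<close> degree_phi by (simp add: degree_mult_eq del: mult_pCons_left)
  have dB: "degree ([:1,0,-1:] * B) = n"
    using B \<open>B \<noteq> 0\<close> degree_psi n_pos by (simp add: degree_mult_eq del: mult_pCons_left)
  have lA: "lead_coeff A = lead_coeff \<phi>" using A by (simp add: lead_coeff_mult del: mult_pCons_left)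
  have lB: "lead_coeff ([:1,0,-1:] * B) = - lead_coeff \<psi>"
    using B by (simp add: lead_coeff_mult del: mult_pCons_left)
  have "lead_coeff \<phi> / lead_coeff \<psi> = wip (\<lambda>t. (1 - t\<^sup>2) * w t) \<psi> A"
    using wip_orthonormal_same_degree[OF admissible_psi_weight psi_orthonormal dA] lA by simp
  also have "\<dots> = wip w \<phi> ([:1,0,-1:] * B)"
    unfolding wip_one_minus_square by (rule wip_cong) (simp add: A B algebra_simps del: mult_pCons_left)
  also have "\<dots> = - lead_coeff \<psi> / lead_coeff \<phi>"
    using wip_orthonormal_same_degree[OF admissible phi_orthonormal dB] lB by simp
  moreover have "lead_coeff \<phi> / lead_coeff \<psi> > 0" "- lead_coeff \<psi> / lead_coeff \<phi> < 0"
    using lead_coeff_phi_pos lead_coeff_psi_pos by auto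
  ultimately show False by linarith
qed

lemma finite_node_set: "finite (node_set w n a)" and node_set_subset: "node_set w n a \<subseteq> {-1..1}"
  unfolding node_set_def xi_set_def
  using poly_roots_finite[OF Pa_nonzero[of a]] by (auto dest!: Pa_roots_inside)

lemma finite_eta_set: "finite (eta_set w n)" and eta_set_subset: "eta_set w n \<subseteq> {-1..1}"
proof -
  have "[:1,0,-1:] * \<psi> \<noteq> 0" using psi_nonzero by (simp del: mult_pCons_left)
  then show "finite (eta_set w n)" unfolding eta_set_def by (rule poly_roots_finite)
  have "t \<in> {-1..1}" if "poly ([:1,0,-1:] * \<psi>) t = 0" for t
  proof -
    from that have "t * t = 1 \<or> poly \<psi> t = 0" by (auto simp: algebra_simps)
    then show ?thesis using psi_signs(3)[of t] by (auto simp: square_eq_1_iff)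
  qed
  then show "eta_set w n \<subseteq> {-1..1}" unfolding eta_set_def by auto
qed

lemma mem_eta_set_iff:
  assumes "-1 < x" "x < 1"
  shows "x \<in> eta_set w n \<longleftrightarrow> poly \<psi> x = 0"
proof -
  have "x * x < 1" using assms abs_square_less_1[of x] by (simp add: power2_eq_square abs_less_iff)
  then show ?thesis unfolding eta_set_def by (simp add: algebra_simps)
qed

lemma mem_node_set_iff: "-1 < x \<Longrightarrow> x < 1 \<Longrightarrow> x \<in> node_set w n a \<longleftrightarrow> poly (Pa w n a) x = 0"
  unfolding node_set_def xi_set_def by auto

text \<open>If \<open>\<psi>(x) \<noteq> 0\<close>, the unique parameter \<open>a\<close> with \<open>P\<^sub>a(x) = 0\<close>: its sign is that of
  \<open>\<phi>(x)/\<psi>(x)\<close>, and it is obtained by dividing by \<open>1 - x\<close> resp. \<open>1 + x\<close>.\<close>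

definition node_parameter :: "real \<Rightarrow> real" where
  "node_parameter x =
     (if poly \<phi> x / poly \<psi> x \<ge> 0 then poly \<phi> x / poly \<psi> x / (1 - x) else poly \<phi> x / poly \<psi> x / (1 + x))"

definition node_set_of :: "real \<Rightarrow> real set" where
  "node_set_of x = (if poly \<psi> x = 0 then eta_set w n else node_set w n (node_parameter x))"

lemma node_set_of_contains:
  assumes x: "-1 < x" "x < 1"
  shows "node_set_of x \<in> node_sets w n" "x \<in> node_set_of x"
proof -
  show "x \<in> node_set_of x"
  proof (cases "poly \<psi> x = 0")
    case False
    define r where "r = poly \<phi> x / poly \<psi> x"
    have "poly \<phi> x = r * poly \<psi> x" unfolding r_def using False by simp
    moreover have "node_parameter x = (if r \<ge> 0 then r / (1 - x) else r / (1 + x))"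
      unfolding node_parameter_def r_def ..
    moreover have "node_parameter x \<ge> 0 \<longleftrightarrow> r \<ge> 0"
      using x unfolding calculation(2) by (auto simp: divide_less_0_iff not_le)
    ultimately have "poly (Pa w n (node_parameter x)) x = 0"
      using x unfolding poly_Pa by auto
    then show ?thesis using False mem_node_set_iff[OF x] unfolding node_set_of_def by simp
  qed (use mem_eta_set_iff[OF x] in \<open>simp add: node_set_of_def\<close>)
  show "node_set_of x \<in> node_sets w n" unfolding node_set_of_def node_sets_def by auto
qed

lemma node_set_of_unique:
  assumes x: "-1 < x" "x < 1" and S: "S \<in> node_sets w n" "x \<in> S"
  shows "S = node_set_of x"
proof -
  from S(1) consider "S = eta_set w n" | a where "S = node_set w n a"
    unfolding node_sets_def by auto
  then show ?thesis
  proof cases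
    case 1
    then show ?thesis using S(2) mem_eta_set_iff[OF x] unfolding node_set_of_def by auto
  next
    case 2
    then have Pa_x: "poly (Pa w n a) x = 0" using S(2) mem_node_set_iff[OF x] by auto
    then have psi_x: "poly \<psi> x \<noteq> 0"
      using phi_psi_no_common_root[of x] unfolding poly_Pa by (auto split: if_splits)
    have "node_parameter x = a"
    proof (cases "a \<ge> 0")
      case True
      then have "poly \<phi> x / poly \<psi> x = a * (1 - x)" using Pa_x psi_x unfolding poly_Pa by simp
      then show ?thesis unfolding node_parameter_def using True x by simp
    next
      case False
      then have "poly \<phi> x / poly \<psi> x = a * (1 + x)" using Pa_x psi_x unfolding poly_Pa by simp
      moreover have "a * (1 + x) < 0" using False x by (simp add: mult_neg_pos)
      ultimately show ?thesis unfolding node_parameter_def using x by simp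
    qed
    then show ?thesis unfolding node_set_of_def using psi_x 2 by simp
  qed
qed

lemma Sx_eq: "-1 < x \<Longrightarrow> x < 1 \<Longrightarrow> Sx w n x = node_set_of x"
  unfolding Sx_def by (rule the_equality) (use node_set_of_contains node_set_of_unique in auto)

lemma Sx_properties:
  assumes "-1 < x" "x < 1"
  shows "finite (Sx w n x)" "Sx w n x \<subseteq> {-1..1}" "x \<in> Sx w n x"
  using Sx_eq[OF assms] node_set_of_contains[OF assms]
    finite_node_set node_set_subset finite_eta_set eta_set_subset
  by (auto simp: node_set_of_def)

end


section \<open>Hermite interpolants of a step function\<close>

lemma poly_less_if_pderiv_pos:
  fixes q :: "real poly"
  assumes "a < b" "\<And>\<xi>. a < \<xi> \<Longrightarrow> \<xi> < b \<Longrightarrow> poly (pderiv q) \<xi> > 0"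
  shows "poly q a < poly q b"
proof -
  obtain \<xi> where \<xi>: "a < \<xi>" "\<xi> < b" "poly q b - poly q a = (b - a) * poly (pderiv q) \<xi>"
    using poly_MVT[OF assms(1)] by blast
  then have "(b - a) * poly (pderiv q) \<xi> > 0" using assms by simp
  then show ?thesis using \<xi>(3) by simp
qed

lemma poly_greater_if_pderiv_neg:
  fixes q :: "real poly"
  assumes "a < b" "\<And>\<xi>. a < \<xi> \<Longrightarrow> \<xi> < b \<Longrightarrow> poly (pderiv q) \<xi> < 0"
  shows "poly q a > poly q b"
  using poly_less_if_pderiv_pos[of a b "- q"] assms by (simp add: pderiv_minus)

lemma Int_greaterThanLessThan_split:
  fixes a b c :: real
  shows "a < b \<Longrightarrow> b < c \<Longrightarrow> A \<inter> {a<..<c} = A \<inter> {a<..<b} \<union> A \<inter> {b} \<union> A \<inter> {b<..<c}"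
  by auto

definition step_le :: "real \<Rightarrow> real \<Rightarrow> real" where
  "step_le x u = (if u \<le> x then 1 else 0)"

definition sorted_node :: "real set \<Rightarrow> nat \<Rightarrow> real" where
  "sorted_node S i = sorted_list_of_set S ! i"

text \<open>The nodes \<open>u \<noteq> x\<close> with \<open>I(u) = 2\<close>, where the derivative of the interpolant is prescribed.\<close>

definition double_nodes :: "real set \<Rightarrow> real \<Rightarrow> real set" where
  "double_nodes S x = (S - {x}) \<inter> {-1<..<1}"

locale step_interpolant =
  fixes S :: "real set" and x :: real and p :: "real poly"
  assumes finite_S: "finite S" and S_subset: "S \<subseteq> {-1..1}" and x_in_S: "x \<in> S"
    and x_gt: "-1 < x" and x_lt: "x < 1"
    and interpolates: "\<forall>u\<in>S. poly p u = step_le x u"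
    and pderiv_double_nodes: "\<forall>u\<in>double_nodes S x. poly (pderiv p) u = 0"
    and degree_less: "p = 0 \<or> degree p < card S + card (double_nodes S x)"
begin

abbreviation "s \<equiv> sorted_node S"
abbreviation "K \<equiv> card S"
abbreviation "D \<equiv> double_nodes S x"

lemma s_strict_mono: "i < l \<Longrightarrow> l < K \<Longrightarrow> s i < s l"
  unfolding sorted_node_def using sorted_wrt_nth_less[OF strict_sorted_list_of_set[of S]] finite_S
  by simp

lemma s_in_S: "i < K \<Longrightarrow> s i \<in> S"
  unfolding sorted_node_def using finite_S nth_mem[of i "sorted_list_of_set S"] by simp

lemma ex_sorted_node: "u \<in> S \<Longrightarrow> \<exists>i<K. s i = u"
  unfolding sorted_node_def using finite_S
  by (metis in_set_conv_nth length_sorted_list_of_set set_sorted_list_of_set)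

lemma s_less_iff: "i < K \<Longrightarrow> l < K \<Longrightarrow> s i < s l \<longleftrightarrow> i < l"
  using s_strict_mono by (metis less_asym linorder_neqE_nat)

lemma s_le_iff: "i < K \<Longrightarrow> l < K \<Longrightarrow> s i \<le> s l \<longleftrightarrow> i \<le> l"
  using s_less_iff by (meson not_le)

lemma s_eq_iff: "i < K \<Longrightarrow> l < K \<Longrightarrow> s i = s l \<longleftrightarrow> i = l"
  using s_less_iff by (metis less_irrefl linorder_neqE_nat)

lemma s_bounds: "i < K \<Longrightarrow> -1 \<le> s i \<and> s i \<le> 1"
  using s_in_S S_subset by fastforce

definition j :: nat where "j = (THE i. i < K \<and> s i = x)"

lemma j_less: "j < K" and s_j: "s j = x"
proof -
  obtain i where i: "i < K" "s i = x" using ex_sorted_node[OF x_in_S] by blast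
  have "j = i" unfolding j_def by (rule the_equality) (use i s_eq_iff in auto)
  then show "j < K" "s j = x" using i by auto
qed

lemma p_at_node: "i < K \<Longrightarrow> poly p (s i) = (if i \<le> j then 1 else 0)"
  using interpolates s_in_S[of i] j_less s_j s_le_iff[of i j] unfolding step_le_def by auto

lemma double_nodes_subset: "D \<subseteq> S" and finite_double_nodes: "finite D"
  using finite_S finite_subset unfolding double_nodes_def by auto

text \<open>If \<open>x\<close> is the largest node, the constant \<open>1\<close> meets all conditions.\<close>

lemma p_eq_1_if_x_last: "Suc j = K \<Longrightarrow> p = 1"
proof (rule hermite_interpolant_unique[OF finite_S double_nodes_subset])
  assume "Suc j = K"
  then have "u \<le> x" if "u \<in> S" for u
    using that ex_sorted_node j_less s_j s_le_iff[of _ j] by force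
  then show "hermite_fit S D (step_le x) 1" unfolding hermite_fit_def step_le_def by auto
  show "hermite_fit S D (step_le x) p"
    unfolding hermite_fit_def using interpolates pderiv_double_nodes by auto
  show "p = 0 \<or> degree p < K + card D" by (rule degree_less)
  show "(1::real poly) = 0 \<or> degree (1::real poly) < K + card D" using j_less by simp
qed

end

text \<open>Rolle's theorem gives a critical point \<open>r i\<close> of \<open>p\<close> strictly inside every gap
  \<open>(s i, s (i+1))\<close> other than the one right of \<open>x\<close>; together with the double nodes these are
  \<open>card D + K - 2 \<ge> degree (pderiv p)\<close> zeros, hence all zeros of \<open>pderiv p\<close>, all simple.\<close>

locale nonconstant_step_interpolant = step_interpolant +
  assumes node_right_of_x: "\<exists>u\<in>S. x < u"
begin

lemma Suc_j_less: "Suc j < K"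
proof -
  obtain u i where "u \<in> S" "x < u" "i < K" "s i = u" using node_right_of_x ex_sorted_node by blast
  then show ?thesis using s_less_iff[OF j_less, of i] s_j by auto
qed

lemma two_le_K: "2 \<le> K" using Suc_j_less by simp

definition rolle_point :: "nat \<Rightarrow> real" where
  "rolle_point i = (SOME r. s i < r \<and> r < s (Suc i) \<and> poly (pderiv p) r = 0)"

abbreviation "r \<equiv> rolle_point"
abbreviation "dp t \<equiv> poly (pderiv p) t"

definition gaps :: "nat set" where "gaps = {i. Suc i < K \<and> i \<noteq> j}"

definition crit :: "real set" where "crit = D \<union> r ` gaps"

lemma in_gaps_iff: "i \<in> gaps \<longleftrightarrow> Suc i < K \<and> i \<noteq> j"
  unfolding gaps_def by simp

lemma rolle_point:
  assumes "i \<in> gaps"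
  shows "s i < r i" "r i < s (Suc i)" "dp (r i) = 0"
proof -
  have i: "Suc i < K" "i \<noteq> j" using assms by (auto simp: in_gaps_iff)
  then have lt: "s i < s (Suc i)" using s_strict_mono by simp
  obtain \<xi> where "s i < \<xi>" "\<xi> < s (Suc i)"
      "poly p (s (Suc i)) - poly p (s i) = (s (Suc i) - s i) * dp \<xi>"
    using poly_MVT[OF lt, of p] by blast
  moreover have "poly p (s i) = poly p (s (Suc i))" using p_at_node[of i] p_at_node[of "Suc i"] i by auto
  ultimately have "\<exists>r. s i < r \<and> r < s (Suc i) \<and> dp r = 0" using lt by auto
  then have "s i < r i \<and> r i < s (Suc i) \<and> dp (r i) = 0" unfolding rolle_point_def by (rule someI_ex)
  then show "s i < r i" "r i < s (Suc i)" "dp (r i) = 0" by auto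
qed

lemma no_node_strictly_between: "Suc i < K \<Longrightarrow> s i < u \<Longrightarrow> u < s (Suc i) \<Longrightarrow> u \<notin> S"
  using ex_sorted_node s_less_iff by (metis Suc_lessD less_antisym not_less_eq)

lemma rolle_point_notin_S: "i \<in> gaps \<Longrightarrow> r i \<notin> S"
  using no_node_strictly_between rolle_point by (auto simp: in_gaps_iff)

lemma rolle_point_less: "i \<in> gaps \<Longrightarrow> l \<in> gaps \<Longrightarrow> i < l \<Longrightarrow> r i < r l"
  using rolle_point[of i] rolle_point[of l] s_le_iff[of "Suc i" l]
  by (force simp: in_gaps_iff)

lemma inj_on_rolle_point: "inj_on r gaps"
  by (rule inj_onI) (metis rolle_point_less less_irrefl linorder_neqE_nat)

lemma finite_gaps: "finite gaps"
  unfolding gaps_def by (rule finite_subset[of _ "{..<K}"]) auto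

lemma finite_crit: "finite crit"
  unfolding crit_def using finite_double_nodes finite_gaps by auto

lemma card_crit: "card crit = card D + (K - 2)"
proof -
  have "gaps = {..<K - 1} - {j}" unfolding gaps_def by auto
  then have "card gaps = K - 2" using Suc_j_less by simp
  moreover have "D \<inter> r ` gaps = {}" using rolle_point_notin_S double_nodes_subset by auto
  ultimately show ?thesis
    unfolding crit_def using finite_double_nodes finite_gaps inj_on_rolle_point
    by (simp add: card_Un_disjoint card_image)
qed

lemma pderiv_nonzero: "pderiv p \<noteq> 0"
proof
  assume "pderiv p = 0"
  then have "degree p = 0" by (simp add: pderiv_eq_0_iff)
  then have "poly p (s j) = poly p (s (Suc j))"
    using degree_0_id[of p] by (metis poly_pCons poly_0 mult_zero_right add_0_right)
  then show False using p_at_node[OF j_less] p_at_node[OF Suc_j_less] by simp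
qed

lemma degree_pderiv_le: "degree (pderiv p) \<le> card crit"
  using degree_less pderiv_nonzero Suc_j_less unfolding degree_pderiv card_crit by auto

lemma pderiv_crit: "z \<in> crit \<Longrightarrow> dp z = 0"
  unfolding crit_def using pderiv_double_nodes rolle_point(3) by auto

lemma pderiv_eq_0_iff: "dp t = 0 \<longleftrightarrow> t \<in> crit"
proof -
  have "pderiv p = smult (lead_coeff (pderiv p)) (root_poly crit)"
    using poly_eq_smult_root_poly(1)[OF finite_crit _ pderiv_nonzero degree_pderiv_le] pderiv_crit
    by auto
  moreover have "lead_coeff (pderiv p) \<noteq> 0" using pderiv_nonzero by simp
  ultimately show ?thesis using poly_root_poly_eq_0_iff[OF finite_crit, of t] by (metis poly_smult mult_eq_0_iff)
qed

lemma pderiv_same_sign: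
  assumes "t1 < t2" "t1 \<notin> crit" "t2 \<notin> crit" "crit \<inter> {t1<..<t2} = {}"
  shows "dp t1 * dp t2 > 0"
  using poly_sign_product_parity(2)[OF pderiv_nonzero finite_crit _ degree_pderiv_le assms(1-3)]
    pderiv_crit assms(4) by auto

lemma pderiv_opposite_sign:
  assumes "t1 < t2" "t1 \<notin> crit" "t2 \<notin> crit" "crit \<inter> {t1<..<t2} = {z}"
  shows "dp t1 * dp t2 < 0"
proof -
  have "dp t1 \<noteq> 0" "dp t2 \<noteq> 0" using pderiv_eq_0_iff assms by auto
  moreover have "\<not> dp t1 * dp t2 > 0"
    using poly_sign_product_parity(2)[OF pderiv_nonzero finite_crit _ degree_pderiv_le assms(1-3)]
      pderiv_crit assms(4) by auto
  ultimately show ?thesis by (simp add: not_less less_le)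
qed

lemma crit_in_gap:
  assumes i: "Suc i < K" and t: "s i \<le> t1" "t2 \<le> s (Suc i)"
  shows "crit \<inter> {t1<..<t2} = (if i = j then {} else {r i} \<inter> {t1<..<t2})"
proof -
  have "z \<notin> D" if "t1 < z" "z < t2" for z
    using that i t no_node_strictly_between[of i z] double_nodes_subset by auto
  then have crit_eq: "crit \<inter> {t1<..<t2} = r ` gaps \<inter> {t1<..<t2}" unfolding crit_def by auto
  have only_i: "l = i" if l: "l \<in> gaps" "t1 < r l" "r l < t2" for l
  proof -
    have "\<not> l < i" using l rolle_point(2)[of l] s_le_iff[of "Suc l" i] i t by (auto simp: in_gaps_iff)
    moreover have "\<not> i < l" using l rolle_point(1)[of l] s_le_iff[of "Suc i" l] i t
      by (auto simp: in_gaps_iff)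
    ultimately show ?thesis by simp
  qed
  have "r ` gaps \<inter> {t1<..<t2} = r ` ({i} \<inter> gaps) \<inter> {t1<..<t2}"
  proof (intro equalityI subsetI)
    fix z assume "z \<in> r ` gaps \<inter> {t1<..<t2}"
    then obtain l where "l \<in> gaps" "z = r l" "t1 < r l" "r l < t2" by auto
    then show "z \<in> r ` ({i} \<inter> gaps) \<inter> {t1<..<t2}" using only_i[of l] by auto
  qed auto
  then show ?thesis unfolding crit_eq using i by (simp add: in_gaps_iff)
qed

lemma node_in_crit_iff: "i < K \<Longrightarrow> s i \<in> crit \<longleftrightarrow> i \<noteq> j \<and> -1 < s i \<and> s i < 1"
  using rolle_point_notin_S s_in_S[of i] s_eq_iff[OF _ j_less, of i] s_j
  unfolding crit_def double_nodes_def by auto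

lemma crit_bounds: "z \<in> crit \<Longrightarrow> s 0 \<le> z \<and> z \<le> s (K - 1)"
proof -
  have bounds: "s 0 \<le> s m \<and> s m \<le> s (K - 1)" if "m < K" for m
    using s_le_iff[of 0 m] s_le_iff[of m "K - 1"] that by auto
  assume "z \<in> crit"
  then consider "z \<in> D" | l where "l \<in> gaps" "z = r l" unfolding crit_def by auto
  then show ?thesis
  proof cases
    case 1
    then show ?thesis using ex_sorted_node double_nodes_subset bounds by blast
  next
    case 2
    then show ?thesis using rolle_point[of l] bounds[of l] bounds[of "Suc l"] by (force simp: in_gaps_iff)
  qed
qed

lemma x_less_next_node: "x < s (Suc j)"
  using s_strict_mono[OF _ Suc_j_less, of j] s_j by simp

lemma notin_crit_in_gap:
  assumes "Suc i < K" "s i < u" "u < s (Suc i)" "i \<noteq> j \<Longrightarrow> u \<noteq> r i"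
  shows "u \<notin> crit"
proof
  assume "u \<in> crit"
  then have "u \<in> crit \<inter> {s i<..<s (Suc i)}" using assms by simp
  then show False unfolding crit_in_gap[OF assms(1) order_refl order_refl]
    using assms(4) by (auto split: if_splits)
qed

lemma notin_crit_right_of_x:
  assumes "x \<le> t" "t < s (Suc j)"
  shows "t \<notin> crit"
proof (cases "t = x")
  case True
  then show ?thesis using node_in_crit_iff[OF j_less] s_j by simp
next
  case False
  then show ?thesis using notin_crit_in_gap[OF Suc_j_less, of t] assms s_j by simp
qed

text \<open>Between \<open>x\<close> and the next node \<open>p\<close> drops from \<open>1\<close> to \<open>0\<close> without a critical point.\<close>

lemma pderiv_neg_right_of_x:
  assumes "x \<le> t" "t \<le> s (Suc j)" "t \<notin> crit"
  shows "dp t < 0"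
proof -
  obtain \<xi> where \<xi>: "x < \<xi>" "\<xi> < s (Suc j)"
      "poly p (s (Suc j)) - poly p x = (s (Suc j) - x) * dp \<xi>"
    using poly_MVT[OF x_less_next_node, of p] by blast
  then have "(s (Suc j) - x) * dp \<xi> < 0"
    using p_at_node[OF Suc_j_less] p_at_node[OF j_less] s_j by simp
  then have \<xi>_neg: "dp \<xi> < 0" using x_less_next_node by (simp add: mult_less_0_iff)
  have no_crit: "crit \<inter> {a<..<b} = {}" if "x \<le> a" "b \<le> s (Suc j)" for a b
    using crit_in_gap[OF Suc_j_less, of a b] that s_j by simp
  have "\<xi> \<notin> crit" using notin_crit_right_of_x \<xi> by simp
  consider "t < \<xi>" | "t = \<xi>" | "\<xi> < t" by linarith
  then show ?thesis
  proof cases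
    case 1
    then have "dp t * dp \<xi> > 0"
      using pderiv_same_sign[OF 1 assms(3) \<open>\<xi> \<notin> crit\<close>] no_crit[of t \<xi>] assms \<xi> by simp
    then show ?thesis using \<xi>_neg by (simp add: zero_less_mult_iff)
  next
    case 3
    then have "dp \<xi> * dp t > 0"
      using pderiv_same_sign[OF 3 \<open>\<xi> \<notin> crit\<close> assms(3)] no_crit[of \<xi> t] assms \<xi> by simp
    then show ?thesis using \<xi>_neg by (simp add: zero_less_mult_iff)
  qed (use \<xi>_neg in simp)
qed

definition rising :: "nat \<Rightarrow> bool" where
  "rising i \<longleftrightarrow> (\<forall>t. s i < t \<and> t < r i \<longrightarrow> dp t > 0)"

definition falling :: "nat \<Rightarrow> bool" where
  "falling i \<longleftrightarrow> (\<forall>t. r i < t \<and> t < s (Suc i) \<longrightarrow> dp t < 0)"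

lemma sign_change_at_rolle_point:
  assumes i: "i \<in> gaps" and t: "s i < t1" "t1 < r i" "r i < t2" "t2 < s (Suc i)"
  shows "dp t1 * dp t2 < 0"
proof (rule pderiv_opposite_sign)
  have "Suc i < K" "i \<noteq> j" using i by (auto simp: in_gaps_iff)
  then show "t1 \<notin> crit" "t2 \<notin> crit" using notin_crit_in_gap t by auto
  show "crit \<inter> {t1<..<t2} = {r i}"
    using crit_in_gap[OF \<open>Suc i < K\<close>, of t1 t2] \<open>i \<noteq> j\<close> t by auto
qed (use t in simp)

lemma rising_iff_falling:
  assumes i: "i \<in> gaps"
  shows "rising i \<longleftrightarrow> falling i"
proof -
  define m1 where "m1 = (s i + r i) / 2"
  define m2 where "m2 = (r i + s (Suc i)) / 2"
  have m: "s i < m1" "m1 < r i" "r i < m2" "m2 < s (Suc i)"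
    using rolle_point[OF i] unfolding m1_def m2_def by auto
  show ?thesis
  proof
    assume "rising i"
    then have "dp m1 > 0" using m unfolding rising_def by auto
    then show "falling i"
      unfolding falling_def using sign_change_at_rolle_point[OF i m(1,2)] by (auto simp: mult_less_0_iff)
  next
    assume "falling i"
    then have "dp m2 < 0" using m unfolding falling_def by auto
    then show "rising i"
      unfolding rising_def using sign_change_at_rolle_point[OF i _ _ m(3,4)] by (auto simp: mult_less_0_iff)
  qed
qed

lemma falling_iff_next_rising:
  assumes i: "i \<in> gaps" "Suc i \<in> gaps"
  shows "falling i \<longleftrightarrow> rising (Suc i)"
proof -
  have K: "Suc (Suc i) < K" "Suc i \<noteq> j" using i(2) by (auto simp: in_gaps_iff)
  have node: "s (Suc i) \<in> crit"
    using node_in_crit_iff[of "Suc i"] K s_strict_mono[of i "Suc i"] s_strict_mono[of "Suc i" "Suc (Suc i)"]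
      s_bounds[of i] s_bounds[of "Suc (Suc i)"] by auto
  have flip: "dp t2 * dp t3 < 0"
    if t: "r i < t2" "t2 < s (Suc i)" "s (Suc i) < t3" "t3 < r (Suc i)" for t2 t3
  proof (rule pderiv_opposite_sign)
    show "t2 \<notin> crit" using notin_crit_in_gap[of i t2] rolle_point[OF i(1)] i t
      by (auto simp: in_gaps_iff)
    show "t3 \<notin> crit" using notin_crit_in_gap[of "Suc i" t3] rolle_point[OF i(2)] i t
      by (auto simp: in_gaps_iff)
    show "crit \<inter> {t2<..<t3} = {s (Suc i)}"
      using Int_greaterThanLessThan_split[of t2 "s (Suc i)" t3 crit] t node
        crit_in_gap[of i t2 "s (Suc i)"] crit_in_gap[of "Suc i" "s (Suc i)" t3]
        rolle_point[OF i(1)] rolle_point[OF i(2)] i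
      by (auto simp: in_gaps_iff)
  qed (use t in simp)
  define m2 where "m2 = (r i + s (Suc i)) / 2"
  define m3 where "m3 = (s (Suc i) + r (Suc i)) / 2"
  have m: "r i < m2" "m2 < s (Suc i)" "s (Suc i) < m3" "m3 < r (Suc i)"
    using rolle_point[OF i(1)] rolle_point[OF i(2)] unfolding m2_def m3_def by auto
  show ?thesis
  proof
    assume "falling i"
    then have "dp m2 < 0" using m unfolding falling_def by auto
    then show "rising (Suc i)"
      unfolding rising_def using flip[OF m(1,2)] by (auto simp: mult_less_0_iff)
  next
    assume "rising (Suc i)"
    then have "dp m3 > 0" using m unfolding rising_def by auto
    then show "falling i"
      unfolding falling_def using flip[OF _ _ m(3,4)] by (auto simp: mult_less_0_iff)
  qed
qed

lemma falling_before_x: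
  assumes "0 < j"
  shows "falling (j - 1)"
  unfolding falling_def
proof (intro allI impI)
  fix t assume "r (j - 1) < t \<and> t < s (Suc (j - 1))"
  moreover have gap: "j - 1 \<in> gaps" "Suc (j - 1) = j" using assms j_less by (auto simp: in_gaps_iff)
  ultimately have t: "r (j - 1) < t" "t < x" using s_j by auto
  have "dp t * dp x > 0"
  proof (rule pderiv_same_sign)
    show "t \<notin> crit" using notin_crit_in_gap[of "j - 1" t] t gap rolle_point[OF gap(1)] s_j
      by (auto simp: in_gaps_iff)
    show "x \<notin> crit" using notin_crit_right_of_x x_less_next_node by simp
    show "crit \<inter> {t<..<x} = {}"
      using crit_in_gap[of "j - 1" t x] t gap rolle_point[OF gap(1)] s_j by (auto simp: in_gaps_iff)
  qed (use t in simp)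
  moreover have "dp x < 0"
    using pderiv_neg_right_of_x notin_crit_right_of_x x_less_next_node by simp
  ultimately show "dp t < 0" by (simp add: zero_less_mult_iff)
qed

lemma rising_after_x:
  assumes "Suc (Suc j) < K"
  shows "rising (Suc j)"
  unfolding rising_def
proof (intro allI impI)
  have gap: "Suc j \<in> gaps" using assms by (auto simp: in_gaps_iff)
  note R = rolle_point[OF gap]
  fix t assume t: "s (Suc j) < t \<and> t < r (Suc j)"
  define m where "m = (x + s (Suc j)) / 2"
  have m: "x < m" "m < s (Suc j)" using x_less_next_node unfolding m_def by auto
  have node: "s (Suc j) \<in> crit"
    using node_in_crit_iff[OF Suc_j_less] x_less_next_node x_gt s_strict_mono[OF _ assms, of "Suc j"]
      s_bounds[OF assms] by auto
  have "dp m * dp t < 0"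
  proof (rule pderiv_opposite_sign)
    show "m \<notin> crit" using notin_crit_right_of_x m by simp
    show "t \<notin> crit" using notin_crit_in_gap[of "Suc j" t] t R assms by auto
    show "crit \<inter> {m<..<t} = {s (Suc j)}"
      using Int_greaterThanLessThan_split[of m "s (Suc j)" t crit] m t node
        crit_in_gap[OF Suc_j_less, of m "s (Suc j)"] crit_in_gap[OF assms, of "s (Suc j)" t] R s_j
      by auto
  qed (use m t in simp)
  moreover have "dp m < 0" using pderiv_neg_right_of_x notin_crit_right_of_x m by simp
  ultimately show "dp t > 0" by (simp add: mult_less_0_iff)
qed

lemma falling_left_of_x:
  assumes "i < j"
  shows "falling i"
proof -
  have "falling l" if "l \<le> j - 1" for l
    using that
  proof (induction rule: inc_induct)
    case base
    show ?case using falling_before_x assms by simp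
  next
    case (step l)
    then have gaps: "l \<in> gaps" "Suc l \<in> gaps" using j_less by (auto simp: in_gaps_iff)
    have "rising (Suc l)" using step.IH rising_iff_falling[OF gaps(2)] by simp
    then show ?case using falling_iff_next_rising[OF gaps] by simp
  qed
  then show ?thesis using assms by simp
qed

lemma rising_right_of_x:
  assumes "Suc j \<le> i" "Suc i < K"
  shows "rising i"
  using assms
proof (induction rule: dec_induct)
  case base
  then show ?case using rising_after_x by simp
next
  case (step l)
  then have gaps: "l \<in> gaps" "Suc l \<in> gaps" by (auto simp: in_gaps_iff)
  have "falling l" using step rising_iff_falling[OF gaps(1)] by simp
  then show ?case using falling_iff_next_rising[OF gaps] by simp
qed

lemma rising_and_falling:
  assumes i: "i \<in> gaps"
  shows "rising i \<and> falling i"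
  using falling_left_of_x[of i] rising_right_of_x[of i] rising_iff_falling[OF i] i
  by (cases "i < j") (auto simp: in_gaps_iff)

lemma first_node_eq: "-1 \<in> S \<Longrightarrow> s 0 = -1"
  using ex_sorted_node[of "-1"] s_le_iff[of 0] s_bounds[of 0] two_le_K by force

lemma last_node_eq: "1 \<in> S \<Longrightarrow> s (K - 1) = 1"
  using ex_sorted_node[of 1] s_le_iff[of _ "K - 1"] s_bounds[of "K - 1"] two_le_K by force

lemma pderiv_pos_right_of_first_node:
  assumes "0 < j"
  obtains m where "s 0 < m" "m \<notin> crit" "crit \<inter> {s 0<..<m} = {}" "dp m > 0"
proof -
  have gap: "0 \<in> gaps" using assms j_less by (auto simp: in_gaps_iff)
  define m where "m = (s 0 + r 0) / 2"
  have m: "s 0 < m" "m < r 0" using rolle_point[OF gap] unfolding m_def by auto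
  show ?thesis
  proof
    show "s 0 < m" by fact
    show "m \<notin> crit" using notin_crit_in_gap[of 0 m] m rolle_point[OF gap] gap by (auto simp: in_gaps_iff)
    show "crit \<inter> {s 0<..<m} = {}"
      using crit_in_gap[of 0 "s 0" m] m rolle_point[OF gap] gap by (auto simp: in_gaps_iff)
    show "dp m > 0" using rising_and_falling[OF gap] m unfolding rising_def by auto
  qed
qed

lemma pderiv_neg_left_of_last_node:
  obtains m where "m < s (K - 1)" "m \<notin> crit" "crit \<inter> {m<..<s (K - 1)} = {}" "dp m < 0"
proof -
  define i where "i = K - 2"
  have i: "Suc i = K - 1" "Suc i < K" "j \<le> i" using Suc_j_less unfolding i_def by auto
  show ?thesis
  proof (cases "i = j")
    case True
    define m where "m = (x + s (Suc j)) / 2"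
    have m: "x < m" "m < s (Suc j)" using x_less_next_node unfolding m_def by auto
    show ?thesis
    proof
      show "m < s (K - 1)" "m \<notin> crit" using m True i notin_crit_right_of_x by auto
      show "crit \<inter> {m<..<s (K - 1)} = {}"
        using crit_in_gap[OF Suc_j_less, of m "s (Suc j)"] m True i s_j by auto
      show "dp m < 0" using pderiv_neg_right_of_x notin_crit_right_of_x m by simp
    qed
  next
    case False
    then have gap: "i \<in> gaps" using i by (auto simp: in_gaps_iff)
    define m where "m = (r i + s (Suc i)) / 2"
    have m: "r i < m" "m < s (Suc i)" using rolle_point[OF gap] unfolding m_def by auto
    show ?thesis
    proof
      show "m < s (K - 1)" using m i by simp
      show "m \<notin> crit" using notin_crit_in_gap[of i m] m rolle_point[OF gap] gap
        by (auto simp: in_gaps_iff)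
      show "crit \<inter> {m<..<s (K - 1)} = {}"
        using crit_in_gap[of i m "s (Suc i)"] m rolle_point[OF gap] gap i by (auto simp: in_gaps_iff)
      show "dp m < 0" using rising_and_falling[OF gap] m unfolding falling_def by auto
    qed
  qed
qed

lemma pderiv_neg_left_of_nodes:
  assumes "-1 \<notin> S" "-1 \<le> t" "t < s 0"
  shows "dp t < 0"
proof -
  have t: "t \<notin> crit" "crit \<inter> {t<..<s 0} = {}" using crit_bounds assms(3) by force+
  show ?thesis
  proof (cases "j = 0")
    case True
    then have "dp t * dp x > 0"
      using pderiv_same_sign[of t x] t assms(3) s_j notin_crit_right_of_x x_less_next_node by simp
    moreover have "dp x < 0"
      using pderiv_neg_right_of_x notin_crit_right_of_x x_less_next_node by simp
    ultimately show ?thesis by (simp add: zero_less_mult_iff)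
  next
    case False
    obtain m where m: "s 0 < m" "m \<notin> crit" "crit \<inter> {s 0<..<m} = {}" "dp m > 0"
      using pderiv_pos_right_of_first_node False by blast
    have "s 0 \<in> crit"
      using node_in_crit_iff[of 0] False s_in_S[of 0] s_bounds[of 0] assms(1) s_strict_mono[of 0 j]
        s_j x_lt j_less by force
    then have "crit \<inter> {t<..<m} = {s 0}"
      using Int_greaterThanLessThan_split[of t "s 0" m crit] assms(3) m t by auto
    then have "dp t * dp m < 0" using pderiv_opposite_sign[of t m] t m assms(3) by simp
    then show ?thesis using m(4) by (simp add: mult_less_0_iff)
  qed
qed

lemma pderiv_pos_right_of_nodes:
  assumes "1 \<notin> S" "s (K - 1) < t" "t \<le> 1"
  shows "dp t > 0"
proof -
  have t: "t \<notin> crit" "crit \<inter> {s (K - 1)<..<t} = {}" using crit_bounds assms(2) by force+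
  obtain m where m: "m < s (K - 1)" "m \<notin> crit" "crit \<inter> {m<..<s (K - 1)} = {}" "dp m < 0"
    using pderiv_neg_left_of_last_node by blast
  have "s (K - 1) \<in> crit"
    using node_in_crit_iff[of "K - 1"] s_in_S[of "K - 1"] s_bounds[of "K - 1"] assms(1)
      s_strict_mono[of j "K - 1"] s_j x_gt Suc_j_less by force
  then have "crit \<inter> {m<..<t} = {s (K - 1)}"
    using Int_greaterThanLessThan_split[of m "s (K - 1)" t crit] assms(2) m t by auto
  then have "dp m * dp t < 0" using pderiv_opposite_sign[of m t] t m assms(2) by simp
  then show ?thesis using m(4) by (simp add: mult_less_0_iff)
qed

lemma pderiv_pos_at_minus_one:
  assumes "-1 \<in> S"
  shows "dp (-1) > 0"
proof -
  have s0: "s 0 = -1" using first_node_eq[OF assms] .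
  then have "0 < j" using s_j x_gt by (cases j) auto
  then obtain m where m: "s 0 < m" "m \<notin> crit" "crit \<inter> {s 0<..<m} = {}" "dp m > 0"
    using pderiv_pos_right_of_first_node by blast
  have "-1 \<notin> crit" using node_in_crit_iff[of 0] s0 two_le_K by auto
  then have "dp (-1) * dp m > 0" using pderiv_same_sign[of "-1" m] s0 m by simp
  then show ?thesis using m(4) by (simp add: zero_less_mult_iff)
qed

lemma pderiv_neg_at_one:
  assumes "1 \<in> S"
  shows "dp 1 < 0"
proof -
  have sL: "s (K - 1) = 1" using last_node_eq[OF assms] .
  obtain m where m: "m < s (K - 1)" "m \<notin> crit" "crit \<inter> {m<..<s (K - 1)} = {}" "dp m < 0"
    using pderiv_neg_left_of_last_node by blast
  have "1 \<notin> crit" using node_in_crit_iff[of "K - 1"] sL two_le_K by auto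
  then have "dp m * dp 1 > 0" using pderiv_same_sign[of m 1] sL m by simp
  then show ?thesis using m(4) by (simp add: zero_less_mult_iff)
qed

lemma node_gap_containing:
  assumes "s 0 \<le> t" "t \<le> s (K - 1)"
  obtains i where "Suc i < K" "s i \<le> t" "t \<le> s (Suc i)"
proof -
  have "\<exists>i\<le>l. s i \<le> t \<and> t \<le> s (Suc i)" if "Suc l < K" "t \<le> s (Suc l)" for l
    using that
  proof (induction l)
    case 0
    then show ?case using assms by auto
  next
    case (Suc l)
    then show ?case by (cases "t \<le> s (Suc l)") (auto intro: le_SucI)
  qed
  moreover have "Suc (K - 2) = K - 1" "Suc (K - 2) < K" using two_le_K by auto
  ultimately obtain i where "i \<le> K - 2" "s i \<le> t" "t \<le> s (Suc i)" using assms(2) by metis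
  then show ?thesis using that[of i] two_le_K by simp
qed

lemma step_le_le_poly_right_of_x:
  assumes t: "x \<le> t" "t \<le> s (Suc j)"
  shows "step_le x t \<le> poly p t"
proof (cases "t = x")
  case True
  then show ?thesis using p_at_node[OF j_less] s_j unfolding step_le_def by simp
next
  case False
  have "poly p (s (Suc j)) \<le> poly p t"
  proof (cases "t = s (Suc j)")
    case False
    then show ?thesis
      using poly_greater_if_pderiv_neg[of t "s (Suc j)" p] t pderiv_neg_right_of_x notin_crit_right_of_x
      by fastforce
  qed simp
  then show ?thesis using p_at_node[OF Suc_j_less] t False unfolding step_le_def by simp
qed

text \<open>In a gap with a Rolle point, \<open>p\<close> rises and then falls back to its common value at the
  two nodes.\<close>

lemma poly_ge_node_in_gap:
  assumes gap: "i \<in> gaps" and t: "s i \<le> t" "t \<le> s (Suc i)"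
  shows "poly p (s i) \<le> poly p t"
proof (cases "t \<le> r i")
  case True
  then show ?thesis
    using poly_less_if_pderiv_pos[of "s i" t p] rising_and_falling[OF gap] t
    unfolding rising_def by (cases "s i = t") auto
next
  case False
  have "poly p (s i) = poly p (s (Suc i))"
    using p_at_node[of i] p_at_node[of "Suc i"] gap by (auto simp: in_gaps_iff)
  then show ?thesis
    using poly_greater_if_pderiv_neg[of t "s (Suc i)" p] rising_and_falling[OF gap] t False
    unfolding falling_def by (cases "t = s (Suc i)") auto
qed

lemma step_le_le_poly_in_gap:
  assumes i: "Suc i < K" "s i \<le> t" "t \<le> s (Suc i)"
  shows "step_le x t \<le> poly p t"
proof (cases "i < j")
  case True
  then have "t \<le> x" using i s_le_iff[of "Suc i" j] j_less s_j by auto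
  then show ?thesis
    using poly_ge_node_in_gap[of i t] p_at_node[of i] i True unfolding step_le_def by (simp add: in_gaps_iff)
next
  case False
  then have "x \<le> t" using i s_le_iff[of j i] j_less s_j by auto
  show ?thesis
  proof (cases "i = j")
    case True
    then show ?thesis using step_le_le_poly_right_of_x \<open>x \<le> t\<close> i by simp
  next
    case False
    then have "x < t" using \<open>\<not> i < j\<close> i s_less_iff[of j i] j_less s_j by auto
    then show ?thesis
      using poly_ge_node_in_gap[of i t] p_at_node[of i] i False \<open>\<not> i < j\<close>
      unfolding step_le_def by (simp add: in_gaps_iff)
  qed
qed

lemma step_le_le_poly_nonconstant:
  assumes "-1 \<le> t" "t \<le> 1"
  shows "step_le x t \<le> poly p t"
proof -
  consider "t < s 0" | "s (K - 1) < t" | "s 0 \<le> t" "t \<le> s (K - 1)" by linarith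
  then show ?thesis
  proof cases
    case 1
    then have "-1 \<notin> S" using first_node_eq assms by force
    then have "poly p (s 0) < poly p t"
      using poly_greater_if_pderiv_neg[OF 1] pderiv_neg_left_of_nodes 1 assms by simp
    then show ?thesis using p_at_node[of 0] two_le_K unfolding step_le_def by simp
  next
    case 2
    then have "1 \<notin> S" using last_node_eq assms by force
    then have "poly p (s (K - 1)) < poly p t"
      using poly_less_if_pderiv_pos[OF 2] pderiv_pos_right_of_nodes 2 assms by simp
    moreover have "x < t" using 2 s_le_iff[OF j_less, of "K - 1"] s_j j_less by force
    moreover have "poly p (s (K - 1)) = 0" using p_at_node[of "K - 1"] Suc_j_less by simp
    ultimately show ?thesis unfolding step_le_def by simp
  next
    case 3
    then show ?thesis using node_gap_containing step_le_le_poly_in_gap by metis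
  qed
qed

end


context step_interpolant
begin

lemma nonconstant_unless_one: "p = 1 \<or> nonconstant_step_interpolant S x p"
proof (cases "Suc j = K")
  case False
  then have "x < s (Suc j)" "s (Suc j) \<in> S" using j_less s_strict_mono[of j "Suc j"] s_j s_in_S by auto
  then have "nonconstant_step_interpolant S x p" by unfold_locales blast
  then show ?thesis ..
qed (use p_eq_1_if_x_last in simp)

lemma step_le_le_poly:
  assumes "t \<in> {-1..1}"
  shows "step_le x t \<le> poly p t"
  using nonconstant_unless_one
proof
  assume "nonconstant_step_interpolant S x p"
  from nonconstant_step_interpolant.step_le_le_poly_nonconstant[OF this] assms show ?thesis by simp
qed (simp add: step_le_def)

lemma pderiv_at_endpoints:
  "(-1 \<in> S \<longrightarrow> 0 \<le> poly (pderiv p) (-1)) \<and> (-1 \<notin> S \<longrightarrow> poly (pderiv p) (-1) \<le> 0) \<and>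
   (1 \<in> S \<longrightarrow> poly (pderiv p) 1 \<le> 0) \<and> (1 \<notin> S \<longrightarrow> 0 \<le> poly (pderiv p) 1)"
  using nonconstant_unless_one
proof
  assume "nonconstant_step_interpolant S x p"
  then interpret nonconstant_step_interpolant S x p .
  have "s 0 \<in> S" "-1 \<le> s 0" "s (K - 1) \<in> S" "s (K - 1) \<le> 1"
    using s_in_S s_bounds two_le_K by auto
  then have "-1 \<notin> S \<Longrightarrow> -1 < s 0" "1 \<notin> S \<Longrightarrow> s (K - 1) < 1"
    by (metis order_le_less)+
  then show ?thesis
    using pderiv_pos_at_minus_one pderiv_neg_at_one pderiv_neg_left_of_nodes[of "-1"]
      pderiv_pos_right_of_nodes[of 1] by force
qed simp

end

text \<open>An interpolant of the step \<open>\<chi>\<^bsub>[-1,x)\<^esub>\<close> becomes one of \<open>\<chi>\<^bsub>[-1,-x]\<^esub>\<close> under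
  \<open>q(t) = 1 - p(-t)\<close> and the reflected nodes.\<close>

lemma reflected_step_interpolant:
  assumes S: "finite S" "S \<subseteq> {-1..1}" "x \<in> S" "-1 < x" "x < 1"
    and P: "degree P < card S + card (double_nodes S x)"
      "hermite_fit S (double_nodes S x) (indicator {-1..<x}) P"
  shows "step_interpolant (uminus ` S) (-x) (1 - pcompose P [:0,-1:])"
proof -
  let ?Q = "1 - pcompose P [:0,-1:]"
  have poly_Q: "poly ?Q t = 1 - poly P (-t)" for t by (simp add: poly_pcompose)
  have pderiv_Q: "poly (pderiv ?Q) t = poly (pderiv P) (-t)" for t
    by (simp add: pderiv_diff pderiv_pcompose poly_pcompose pderiv_pCons)
  have D: "double_nodes (uminus ` S) (-x) = uminus ` double_nodes S x"
    unfolding double_nodes_def by auto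
  have "card (uminus ` S) = card S" "card (uminus ` double_nodes S x) = card (double_nodes S x)"
    by (auto intro!: card_image simp: inj_on_def)
  moreover have "degree ?Q \<le> degree P"
    using degree_diff_le_max[of 1 "pcompose P [:0,-1:]"] by (simp add: degree_pcompose)
  moreover have "poly P u = (if u < x then 1 else 0)" if "u \<in> S" for u
    using P(2) S(2) that unfolding hermite_fit_def by (auto simp: indicator_def)
  ultimately show ?thesis
    using S P(1) P(2) unfolding hermite_fit_def
    by unfold_locales (auto simp: D poly_Q pderiv_Q step_le_def poly_pcompose)
qed

lemma lower_step_interpolant_bounds:
  assumes S: "finite S" "S \<subseteq> {-1..1}" "x \<in> S" "-1 < x" "x < 1"
    and P: "degree P < card S + card (double_nodes S x)"
      "hermite_fit S (double_nodes S x) (indicator {-1..<x}) P"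
  shows "\<forall>t\<in>{-1..1}. poly P t \<le> indicator {-1..<x} t"
    "(-1 \<in> S \<longrightarrow> poly (pderiv P) (-1) \<le> 0) \<and> (-1 \<notin> S \<longrightarrow> 0 \<le> poly (pderiv P) (-1)) \<and>
     (1 \<in> S \<longrightarrow> 0 \<le> poly (pderiv P) 1) \<and> (1 \<notin> S \<longrightarrow> poly (pderiv P) 1 \<le> 0)"
proof -
  interpret step_interpolant "uminus ` S" "-x" "1 - pcompose P [:0,-1:]"
    by (rule reflected_step_interpolant[OF S P])
  have pderiv_Q: "poly (pderiv (1 - pcompose P [:0,-1:])) t = poly (pderiv P) (-t)" for t
    by (simp add: pderiv_diff pderiv_pcompose poly_pcompose pderiv_pCons)
  show "\<forall>t\<in>{-1..1}. poly P t \<le> indicator {-1..<x} t"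
  proof
    fix t :: real assume t: "t \<in> {-1..1}"
    then have "step_le (-x) (-t) \<le> 1 - poly P t"
      using step_le_le_poly[of "-t"] by (simp add: poly_pcompose)
    then show "poly P t \<le> indicator {-1..<x} t"
      using t by (auto simp: step_le_def indicator_def split: if_splits)
  qed
  show "(-1 \<in> S \<longrightarrow> poly (pderiv P) (-1) \<le> 0) \<and> (-1 \<notin> S \<longrightarrow> 0 \<le> poly (pderiv P) (-1)) \<and>
     (1 \<in> S \<longrightarrow> 0 \<le> poly (pderiv P) 1) \<and> (1 \<notin> S \<longrightarrow> poly (pderiv P) 1 \<le> 0)"
    using pderiv_at_endpoints unfolding pderiv_Q by (auto simp: image_iff)
qed

lemma sum_Imult:
  assumes "finite S" "S \<subseteq> {-1..1}"
  shows "(\<Sum>u\<in>S. Imult u) = int (card S) + int (card (S \<inter> {-1<..<1}))"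
proof -
  have "(\<Sum>u\<in>S. Imult u) = (\<Sum>u\<in>S. 1 + (if u \<in> {-1<..<1} then 1 else 0))"
    using assms(2) by (intro sum.cong) (auto simp: Imult_def)
  also have "\<dots> = (\<Sum>u\<in>S. 1) + (\<Sum>u\<in>S. if u \<in> {-1<..<1} then 1 else 0)"
    by (rule sum.distrib)
  also have "(\<Sum>u\<in>S. if u \<in> {-1<..<1} then 1 else (0::int)) = (\<Sum>u\<in>S \<inter> {-1<..<1}. 1)"
    using sum.inter_restrict[OF assms(1), of "\<lambda>_. (1::int)" "{-1<..<1}"] by simp
  finally show ?thesis by simp
qed

lemma card_double_nodes:
  assumes "finite S" "x \<in> S" "-1 < x" "x < 1"
  shows "card (double_nodes S x) + 1 = card (S \<inter> {-1<..<1})"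
proof -
  have "double_nodes S x = (S \<inter> {-1<..<1}) - {x}" unfolding double_nodes_def by auto
  moreover have "x \<in> S \<inter> {-1<..<1}" "finite (S \<inter> {-1<..<1})" using assms by auto
  moreover have "card (S \<inter> {-1<..<1}) > 0" using calculation(2,3) card_gt_0_iff by blast
  ultimately show ?thesis by (simp add: card_Diff_singleton)
qed

text \<open>The constraints defining \<open>p_up\<close> and \<open>p_low\<close> are a Hermite interpolation problem: the
  degree bound \<open>\<Sum> I(u) - 2\<close> is one less than the number \<open>card S + card (double_nodes S x)\<close>
  of conditions.\<close>

lemma hermite_step_The:
  fixes S L R :: "real set"
  assumes S: "finite S" "S \<subseteq> {-1..1}" "x \<in> S" "-1 < x" "x < 1"
    and LR: "S \<subseteq> L \<union> R" "L \<inter> R = {}"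
  defines "P \<equiv> THE p. int (degree p) \<le> (\<Sum>u\<in>S. Imult u) - 2 \<and>
      (\<forall>u \<in> S \<inter> L. poly p u = 1) \<and> (\<forall>u \<in> S \<inter> R. poly p u = 0) \<and>
      (\<forall>u \<in> (S - {x}) \<inter> {-1<..<1}. poly (pderiv p) u = 0)"
  shows "degree P < card S + card (double_nodes S x) \<and> hermite_fit S (double_nodes S x) (indicator L) P"
  unfolding P_def
proof (rule hermite_interpolant_The[OF S(1)])
  show "double_nodes S x \<subseteq> S" unfolding double_nodes_def by auto
  have "card S > 0" using S(1,3) card_gt_0_iff by blast
  then show "1 \<le> card S + card (double_nodes S x)" by simp
  fix p :: "real poly"
  have "int (degree p) \<le> (\<Sum>u\<in>S. Imult u) - 2 \<longleftrightarrow> degree p < card S + card (double_nodes S x)"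
    using sum_Imult[OF S(1,2)] card_double_nodes[OF S(1,3-5)] by linarith
  moreover have "(\<forall>u \<in> S \<inter> L. poly p u = 1) \<and> (\<forall>u \<in> S \<inter> R. poly p u = 0) \<longleftrightarrow>
      (\<forall>u\<in>S. poly p u = indicator L u)"
    using LR by (auto simp: indicator_def)
  ultimately show "int (degree p) \<le> (\<Sum>u\<in>S. Imult u) - 2 \<and>
      (\<forall>u \<in> S \<inter> L. poly p u = 1) \<and> (\<forall>u \<in> S \<inter> R. poly p u = 0) \<and>
      (\<forall>u \<in> (S - {x}) \<inter> {-1<..<1}. poly (pderiv p) u = 0) \<longleftrightarrow>
      degree p < card S + card (double_nodes S x) \<and> hermite_fit S (double_nodes S x) (indicator L) p"
    unfolding hermite_fit_def double_nodes_def by argo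
qed


theorem lemma6p5:
  fixes w :: "real \<Rightarrow> real" and n :: nat and x :: real
  assumes w_nonneg: "\<And>t. t \<in> {-1..1} \<Longrightarrow> w t \<ge> 0"
    and w_int: "w integrable_on {-1..1}"
    and w_nonzero: "integral {-1..1} w \<noteq> 0"
    and n: "n \<ge> 1"
    and x: "-1 < x" "x < 1"
  shows "(\<forall>t \<in> {-1..1}.
            poly (p_low w n x) t \<le> indicator {-1..<x} t \<and>
            indicator {-1..<x} t \<le> (indicator {-1..x} t :: real) \<and>
            indicator {-1..x} t \<le> poly (p_up w n x) t)
      \<and> (-1 \<in> Sx w n x \<longrightarrow>
            poly (pderiv (p_low w n x)) (-1) \<le> 0 \<and> 0 \<le> poly (pderiv (p_up w n x)) (-1))
      \<and> (-1 \<notin> Sx w n x \<longrightarrow>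
            poly (pderiv (p_up w n x)) (-1) \<le> 0 \<and> 0 \<le> poly (pderiv (p_low w n x)) (-1))
      \<and> (1 \<in> Sx w n x \<longrightarrow>
            poly (pderiv (p_up w n x)) 1 \<le> 0 \<and> 0 \<le> poly (pderiv (p_low w n x)) 1)
      \<and> (1 \<notin> Sx w n x \<longrightarrow>
            poly (pderiv (p_low w n x)) 1 \<le> 0 \<and> 0 \<le> poly (pderiv (p_up w n x)) 1)"
proof -
  interpret weight_setting w n
    using w_nonneg w_int w_nonzero n by unfold_locales (auto simp: admissible_weight_def)
  define S where "S = Sx w n x"
  have S: "finite S" "S \<subseteq> {-1..1}" "x \<in> S" using Sx_properties[OF x] unfolding S_def by auto
  have LR: "S \<subseteq> {-1..x} \<union> {x<..1}" "{-1..x} \<inter> {x<..1} = {}"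
      "S \<subseteq> {-1..<x} \<union> {x..1}" "{-1..<x} \<inter> {x..1} = {}"
    using S(2) by auto
  have up: "degree (p_up w n x) < card S + card (double_nodes S x)"
      "hermite_fit S (double_nodes S x) (indicator {-1..x}) (p_up w n x)"
    using hermite_step_The[OF S x LR(1,2)] unfolding p_up_def S_def by auto
  have low: "degree (p_low w n x) < card S + card (double_nodes S x)"
      "hermite_fit S (double_nodes S x) (indicator {-1..<x}) (p_low w n x)"
    using hermite_step_The[OF S x LR(3,4)] unfolding p_low_def S_def by auto
  interpret up: step_interpolant S x "p_up w n x"
    using S x up unfolding hermite_fit_def by unfold_locales (auto simp: indicator_def step_le_def)
  have "indicator {-1..x} t \<le> poly (p_up w n x) t" if "t \<in> {-1..1}" for t
    using up.step_le_le_poly[OF that] that by (auto simp: step_le_def indicator_def split: if_splits)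
  then show ?thesis
    using lower_step_interpolant_bounds[OF S x low] up.pderiv_at_endpoints
    unfolding S_def by (auto simp: indicator_def)
qed

end
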